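(* Let $f$ satisfy $(\mathcal A)$, let $t_0>0$, $q>0$, $p\ge1$. Let $y:[t_0,+\infty[\to\mathcal H$ be continuously differentiable and $\lambda:[t_0,+\infty[\to\,]0,+\infty[$ continuous such that, with $\tau(t)=\frac{1}{q^q}\big(t_0+\int_{t_0}^t[\lambda(r)]^{1/q}dr\big)^q$, for all $t\ge t_0$: $$\dot y(t)+\dot\tau(t)\nabla f(y(t))=0,\qquad [\lambda(t)]^p\|\dot y(t)\|^{p-1}=1 .$$ Then, as $t\to+\infty$: (i) $f(y(t))-\inf_{\mathcal H}f=o\big(t^{-(1+q-\frac1p)}\big)$; (ii) $\|\nabla f(y(t))\|=o\big(t^{-(1+q-\frac1p)}\big)$; (iii) $\int_{t_0}^{+\infty}t^{1+\frac1q-\frac{1}{pq}}\|\dot y(t)\|^{2+\frac{p-1}{pq}}\,dt<+\infty$; (iv) $y(t)$ converges weakly as $t\to+\infty$ to an element of $S=\operatorname{argmin} f$.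
   Context: $\mathcal H$ is a real Hilbert space. Assumption $(\mathcal A)$: $f:\mathcal H\to\mathbb R$ is convex and continuously differentiable, $S=\operatorname{argmin}_{\mathcal H} f\neq\emptyset$, and $\nabla f$ is Lipschitz continuous on bounded subsets of $\mathcal H$. *)

theory Defs
  imports "HOL-Analysis.Analysis" "HOL-Library.Landau_Symbols"
begin

text \<open>Real power with the convention 0 to the 0 equals 1 (Isabelle's powr gives 0 powr 0 = 0).\<close>
definition rpow :: "real \<Rightarrow> real \<Rightarrow> real" where
  "rpow x a = (if a = 0 then 1 else x powr a)"

definition tau_fun :: "real \<Rightarrow> real \<Rightarrow> (real \<Rightarrow> real) \<Rightarrow> real \<Rightarrow> real" where
  "tau_fun t0 q lam t =
     (1 / q powr q) * (t0 + integral {t0..t} (\<lambda>r. lam r powr (1 / q))) powr q"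

definition weak_conv_at_top :: "(real \<Rightarrow> 'a::real_inner) \<Rightarrow> 'a \<Rightarrow> bool" where
  "weak_conv_at_top y x \<longleftrightarrow> (\<forall>v. ((\<lambda>t. y t \<bullet> v) \<longlongrightarrow> x \<bullet> v) at_top)"

end

theory Submission
  imports Defs "HOL-Real_Asymp.Real_Asymp"
begin

text \<open>Write \<open>g = \<nabla>f \<circ> y\<close> and \<open>dtau = \<tau>' > 0\<close>, so that \<open>y' = - \<tau>' g\<close>. Convexity makes three
  quantities nonincreasing: \<open>f \<circ> y\<close>, \<open>\<parallel>y - x\<parallel>\<^sup>2\<close> for every minimizer \<open>x\<close>, and the Lyapunov function
  \<open>V = \<tau> (f \<circ> y - min f) + \<parallel>y - x\<^sub>*\<parallel>\<^sup>2 / 2\<close>, whose derivative is at most \<open>- \<tau>' \<tau> \<parallel>g\<parallel>\<^sup>2\<close>.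
  Monotonicity of \<open>\<nabla>f\<close> makes \<open>\<parallel>g\<parallel>\<close> nonincreasing, and together with \<open>V\<close> this bounds \<open>\<parallel>g\<parallel> \<tau>\<close>.
  Inserted into the closed-loop law \<open>\<lambda>\<^sup>p \<parallel>y'\<parallel>\<^sup>p\<^sup>-\<^sup>1 = 1\<close>, the bound gives \<open>\<lambda>\<^sup>1\<^sup>/\<^sup>q \<ge> c \<Lambda>\<^sup>\<theta>\<close> for
  \<open>\<Lambda> = t\<^sub>0 + \<integral> \<lambda>\<^sup>1\<^sup>/\<^sup>q\<close> and \<open>\<theta> = (p - 1) / (pq + p - 1)\<close>; hence \<open>\<Lambda>\<^sup>1\<^sup>-\<^sup>\<theta>\<close> grows at least
  linearly and \<open>\<tau> \<ge> \<kappa> t\<^sup>1\<^sup>+\<^sup>q\<^sup>-\<^sup>1\<^sup>/\<^sup>p\<close>. The rates follow from tail estimates for the convergent quantities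
  \<open>\<parallel>y - x\<^sub>*\<parallel>\<^sup>2\<close> and \<open>V\<close>, the integrability from \<open>\<integral> \<tau>' \<tau> \<parallel>g\<parallel>\<^sup>2 \<le> V(t\<^sub>0)\<close>, and weak convergence
  from Opial's lemma.\<close>

section \<open>Real functions on half-lines\<close>

lemma antimono_if_deriv_nonpos_Ici:
  fixes F :: "real \<Rightarrow> real"
  assumes "t0 \<le> a" "a \<le> b"
    and "\<And>x. x \<ge> t0 \<Longrightarrow> (F has_real_derivative F' x) (at x within {t0..})"
    and "\<And>x. x \<in> {a..b} \<Longrightarrow> F' x \<le> 0"
  shows "F b \<le> F a"
proof -
  have "(F' has_integral (F b - F a)) {a..b}"
  proof (rule fundamental_theorem_of_calculus[OF assms(2)])
    fix x assume "x \<in> {a..b}"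
    with assms(1) assms(3)[of x] show "(F has_vector_derivative F' x) (at x within {a..b})"
      by (auto simp: has_real_derivative_iff_has_vector_derivative
          intro: has_vector_derivative_within_subset)
  qed
  from has_integral_le[OF this has_integral_0] assms(4) show ?thesis by force
qed

lemma antimono_if_increments_small:
  fixes \<phi> :: "real \<Rightarrow> real"
  assumes "a \<le> b"
    and small: "\<And>\<epsilon>. \<epsilon> > 0 \<Longrightarrow> \<exists>\<delta>>0. \<forall>r r'. a \<le> r \<longrightarrow> r < r' \<longrightarrow> r' \<le> b \<longrightarrow> r' - r < \<delta>
                  \<longrightarrow> \<phi> r' - \<phi> r \<le> \<epsilon> * (r' - r)"
  shows "\<phi> b \<le> \<phi> a"
proof (rule field_le_epsilon)
  fix e :: real assume "e > 0"
  show "\<phi> b \<le> \<phi> a + e"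
  proof (cases "a = b")
    case False
    with assms(1) have ab: "a < b" by simp
    define \<epsilon> where "\<epsilon> = e / (b - a)"
    have "\<epsilon> > 0" using \<open>e > 0\<close> ab by (simp add: \<epsilon>_def)
    then obtain \<delta> where "\<delta> > 0" and \<delta>: "\<And>r r'. a \<le> r \<Longrightarrow> r < r' \<Longrightarrow> r' \<le> b \<Longrightarrow> r' - r < \<delta>
        \<Longrightarrow> \<phi> r' - \<phi> r \<le> \<epsilon> * (r' - r)"
      using small by blast
    obtain N :: nat where N: "(b - a) / \<delta> < N" using reals_Archimedean2 by blast
    have "0 < (b - a) / \<delta>" using ab \<open>\<delta> > 0\<close> by simp
    with N have "N > 0" by simp
    define h where "h = (b - a) / N"
    have "h > 0" "h < \<delta>"
      using ab \<open>N > 0\<close> N \<open>\<delta> > 0\<close> by (auto simp: h_def field_simps)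
    define s where "s k = a + real k * h" for k
    have "\<phi> (s (Suc k)) - \<phi> (s k) \<le> \<epsilon> * h" if "k < N" for k
    proof -
      have "real (Suc k) * h \<le> real N * h" using that \<open>h > 0\<close> by (intro mult_right_mono) auto
      then have "s (Suc k) \<le> b" using \<open>N > 0\<close> by (simp add: s_def h_def)
      then show ?thesis
        using \<delta>[of "s k" "s (Suc k)"] \<open>h > 0\<close> \<open>h < \<delta>\<close> by (simp add: s_def algebra_simps)
    qed
    then have "(\<Sum>k<N. \<phi> (s (Suc k)) - \<phi> (s k)) \<le> (\<Sum>k<N. \<epsilon> * h)" by (intro sum_mono) simp
    moreover have "s N = b" "s 0 = a" using \<open>N > 0\<close> by (simp_all add: s_def h_def)
    moreover have "real N * (\<epsilon> * h) = e" using \<open>N > 0\<close> ab by (simp add: \<epsilon>_def h_def)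
    ultimately show ?thesis using sum_lessThan_telescope[of "\<lambda>k. \<phi> (s k)" N] by simp
  qed (use \<open>e > 0\<close> in simp)
qed

lemma antimono_on_Ici_convergent:
  fixes g :: "real \<Rightarrow> real"
  assumes antimono: "\<And>s t. t0 \<le> s \<Longrightarrow> s \<le> t \<Longrightarrow> g t \<le> g s"
    and bounded: "\<And>t. t0 \<le> t \<Longrightarrow> B \<le> g t"
  shows "\<exists>L. (g \<longlongrightarrow> L) at_top \<and> (\<forall>t\<ge>t0. L \<le> g t)"
proof -
  define L where "L = Inf (g ` {t0..})"
  have bdd: "bdd_below (g ` {t0..})" by (rule bdd_belowI[of _ B]) (use bounded in auto)
  have le: "\<forall>t\<ge>t0. L \<le> g t" unfolding L_def using bdd by (auto intro: cInf_lower)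
  have "(g \<longlongrightarrow> L) at_top"
  proof (rule order_tendstoI)
    fix a assume "a < L"
    then show "\<forall>\<^sub>F t in at_top. a < g t"
      unfolding eventually_at_top_linorder using le by (metis less_le_trans)
  next
    fix a assume "L < a"
    then obtain s where "s \<ge> t0" "g s < a"
      unfolding L_def using bdd by (auto simp: cInf_less_iff)
    then show "\<forall>\<^sub>F t in at_top. g t < a"
      unfolding eventually_at_top_linorder by (metis antimono le_less_trans)
  qed
  with le show ?thesis by blast
qed

lemma tendsto_zero_if_dominated_by_tail:
  fixes \<phi> l :: "real \<Rightarrow> real"
  assumes "(l \<longlongrightarrow> L) at_top"
    and "\<And>s. s \<ge> t0 \<Longrightarrow> \<forall>\<^sub>F t in at_top. 0 \<le> \<phi> t \<and> \<phi> t \<le> l s - L"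
  shows "(\<phi> \<longlongrightarrow> 0) at_top"
proof (rule tendstoI)
  fix \<epsilon> :: real assume "\<epsilon> > 0"
  have "\<forall>\<^sub>F s in at_top. l s - L < \<epsilon>"
    using tendstoD[OF assms(1) \<open>\<epsilon> > 0\<close>] by eventually_elim (simp add: dist_real_def)
  then obtain S where "\<And>s. s \<ge> S \<Longrightarrow> l s - L < \<epsilon>" unfolding eventually_at_top_linorder by blast
  then obtain s where "s \<ge> t0" "l s - L < \<epsilon>" by (meson max.cobounded1 max.cobounded2)
  from assms(2)[OF this(1)] show "\<forall>\<^sub>F t in at_top. dist (\<phi> t) 0 < \<epsilon>"
    by eventually_elim (use \<open>l s - L < \<epsilon>\<close> in auto)
qed

lemma smallo_powr_neg_if_tendsto_zero:
  fixes g :: "real \<Rightarrow> real"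
  assumes "((\<lambda>t. g t * t powr b) \<longlongrightarrow> 0) at_top"
  shows "g \<in> o(\<lambda>t. t powr (- b))"
proof (rule smalloI_tendsto)
  show "((\<lambda>t. g t / t powr (- b)) \<longlongrightarrow> 0) at_top"
    using assms by (rule Lim_transform_eventually)
      (use eventually_gt_at_top[of 0] in \<open>eventually_elim, simp add: powr_minus divide_inverse\<close>)
qed (use eventually_gt_at_top[of 0] in \<open>eventually_elim, simp\<close>)

lemma integrable_on_Ici_if_bounded_integrals:
  fixes g :: "real \<Rightarrow> real"
  assumes int: "\<And>T. T \<ge> a \<Longrightarrow> g integrable_on {a..T}"
    and nonneg: "\<And>t. t \<ge> a \<Longrightarrow> 0 \<le> g t"
    and bounded: "\<And>T. T \<ge> a \<Longrightarrow> integral {a..T} g \<le> B"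
  shows "g integrable_on {a..}"
proof -
  define F where "F k x = (if x \<in> {a..a + real k} then g x else 0)" for k :: nat and x
  have Icc_Int: "{a..a + real k} \<inter> {a..} = {a..a + real k}" for k by auto
  have "g integrable_on {a..} \<and> ((\<lambda>k. integral {a..} (F k)) \<longlonglongrightarrow> integral {a..} g)"
  proof (rule monotone_convergence_increasing)
    show "F k integrable_on {a..}" for k
      unfolding F_def integrable_restrict_Int Icc_Int by (rule int) simp
    show "F k x \<le> F (Suc k) x" if "x \<in> {a..}" for k x
      using that nonneg by (auto simp: F_def)
    show "(\<lambda>k. F k x) \<longlonglongrightarrow> g x" if "x \<in> {a..}" for x
    proof -
      obtain N :: nat where "x - a \<le> real N" using real_arch_simple by blast
      then have "\<forall>\<^sub>F k in sequentially. F k x = g x"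
        unfolding eventually_sequentially F_def using that by (intro exI[of _ N]) auto
      then show ?thesis by (rule tendsto_eventually)
    qed
    have "norm (integral {a..} (F k)) \<le> B" for k
    proof -
      have "integral {a..} (F k) = integral {a..a + real k} g"
        unfolding F_def Henstock_Kurzweil_Integration.integral_restrict_Int Icc_Int ..
      moreover have "0 \<le> integral {a..a + real k} g"
        by (rule integral_nonneg[OF int]) (use nonneg in auto)
      ultimately show ?thesis using bounded[of "a + real k"] by simp
    qed
    then show "bounded (range (\<lambda>k. integral {a..} (F k)))" unfolding bounded_iff by blast
  qed
  then show ?thesis by blast
qed

lemma vector_derivative_norm_bound:
  fixes y :: "real \<Rightarrow> 'a::real_normed_vector"
  assumes "r \<le> r'"
    and deriv: "\<And>x. x \<in> {r..r'} \<Longrightarrow> (y has_vector_derivative y' x) (at x within {r..r'})"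
    and bound: "\<And>x. x \<in> {r..r'} \<Longrightarrow> norm (y' x) \<le> M"
  shows "norm (y r' - y r) \<le> M * (r' - r)"
proof -
  have "norm (y r' - y r) \<le> M * norm (r' - r)"
  proof (rule differentiable_bound[where f' = "\<lambda>x h. h *\<^sub>R y' x"])
    show "(y has_derivative (\<lambda>h. h *\<^sub>R y' x)) (at x within {r..r'})" if "x \<in> {r..r'}" for x
      using deriv[OF that] by (simp add: has_vector_derivative_def)
    show "onorm (\<lambda>h. h *\<^sub>R y' x) \<le> M" if "x \<in> {r..r'}" for x
      using bound[OF that] by (simp add: onorm_scaleR_left onorm_id)
  qed (use \<open>r \<le> r'\<close> in auto)
  with \<open>r \<le> r'\<close> show ?thesis by simp
qed

lemma vector_derivative_linearization_bound:
  fixes y :: "real \<Rightarrow> 'a::real_normed_vector"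
  assumes "r \<le> r'"
    and deriv: "\<And>x. x \<in> {r..r'} \<Longrightarrow> (y has_vector_derivative y' x) (at x within {r..r'})"
    and close: "\<And>x. x \<in> {r..r'} \<Longrightarrow> norm (y' x - y' r') \<le> \<eta>"
  shows "norm (y r' - y r - (r' - r) *\<^sub>R y' r') \<le> (r' - r) * \<eta>"
proof -
  have "norm (y r' - y r - (r' - r) *\<^sub>R y' r') \<le> norm (r' - r) * \<eta>"
  proof (rule differentiable_bound_linearization[where f' = "\<lambda>x h. h *\<^sub>R y' x" and S = "{r..r'}"])
    show "r + t *\<^sub>R (r' - r) \<in> {r..r'}" if "t \<in> {0..1}" for t
      using that \<open>r \<le> r'\<close> mult_left_le_one_le[of "r' - r" t] by auto
    show "(y has_derivative (\<lambda>h. h *\<^sub>R y' x)) (at x within {r..r'})" if "x \<in> {r..r'}" for x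
      using deriv[OF that] by (simp add: has_vector_derivative_def)
    show "onorm ((\<lambda>h. h *\<^sub>R y' x) - (\<lambda>h. h *\<^sub>R y' r')) \<le> \<eta>" if "x \<in> {r..r'}" for x
      using close[OF that]
      by (simp add: fun_diff_def scaleR_diff_right[symmetric] onorm_scaleR_left onorm_id)
  qed (use \<open>r \<le> r'\<close> in auto)
  with \<open>r \<le> r'\<close> show ?thesis by simp
qed

lemma powr_lower_if_deriv_ge:
  fixes L :: "real \<Rightarrow> real"
  assumes deriv: "\<And>t. t \<ge> t0 \<Longrightarrow> (L has_real_derivative L' t) (at t within {t0..})"
    and pos: "\<And>t. t \<ge> t0 \<Longrightarrow> L t > 0"
    and growth: "\<And>t. t \<ge> t0 \<Longrightarrow> c * L t powr \<theta> \<le> L' t"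
    and "\<theta> < 1" "t \<ge> t0"
  shows "L t0 powr (1 - \<theta>) + (1 - \<theta>) * c * (t - t0) \<le> L t powr (1 - \<theta>)"
proof -
  define F where "F r = (1 - \<theta>) * c * r - L r powr (1 - \<theta>)" for r
  have "F t \<le> F t0"
  proof (rule antimono_if_deriv_nonpos_Ici[OF order_refl \<open>t \<ge> t0\<close>])
    fix r assume "r \<ge> t0"
    show "(F has_real_derivative (1 - \<theta>) * c - (1 - \<theta>) * L r powr (- \<theta>) * L' r) (at r within {t0..})"
      unfolding F_def
      by (rule derivative_eq_intros DERIV_chain'[OF deriv has_real_derivative_powr] refl pos
             | use \<open>r \<ge> t0\<close> in simp)+
  next
    fix r assume "r \<in> {t0..t}"
    then have "L r > 0" using pos by simp
    have "c = L r powr (- \<theta>) * (c * L r powr \<theta>)"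
      using \<open>L r > 0\<close> by (simp add: powr_minus field_simps)
    also have "\<dots> \<le> L r powr (- \<theta>) * L' r"
      using growth \<open>r \<in> {t0..t}\<close> by (intro mult_left_mono) auto
    finally show "(1 - \<theta>) * c - (1 - \<theta>) * L r powr (- \<theta>) * L' r \<le> 0"
      using \<open>\<theta> < 1\<close> by (simp add: mult.assoc mult_nonneg_nonpos flip: right_diff_distrib)
  qed
  then show ?thesis by (simp add: F_def algebra_simps)
qed

section \<open>The closed-loop relation\<close>

text \<open>For \<open>p = 1\<close> the factor \<open>rpow n 0\<close> is \<open>1\<close> whatever \<open>n\<close> is, so \<open>n\<close> may vanish; the logarithmic
  identity still holds because its coefficient \<open>p - 1\<close> is \<open>0\<close>.\<close>
lemma closed_loop_ln:
  fixes l n p :: real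
  assumes "p \<ge> 1" "l > 0" "n \<ge> 0" and closed_loop: "l powr p * rpow n (p - 1) = 1"
  shows "p * ln l + (p - 1) * ln n = 0" and "p \<noteq> 1 \<Longrightarrow> n > 0"
proof -
  show pos: "n > 0" if "p \<noteq> 1"
    using closed_loop that \<open>n \<ge> 0\<close> by (cases "n = 0") (auto simp: rpow_def)
  show "p * ln l + (p - 1) * ln n = 0"
  proof (cases "p = 1")
    case True
    with closed_loop \<open>l > 0\<close> show ?thesis by (simp add: rpow_def)
  next
    case False
    with closed_loop have "ln (l powr p * n powr (p - 1)) = 0" by (simp add: rpow_def)
    with pos[OF False] \<open>l > 0\<close> show ?thesis by (simp add: ln_mult)
  qed
qed

lemma closed_loop_root_lower:
  fixes l n p q A La :: real
  assumes "p \<ge> 1" "q > 0" "l > 0" "n \<ge> 0" "A > 0" "La > 0"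
    and closed_loop: "l powr p * rpow n (p - 1) = 1"
    and n_le: "n \<le> A * l powr (1 / q) / La"
  shows "(La / A) powr ((p - 1) / (p * q + p - 1)) \<le> l powr (1 / q)"
proof -
  define m where "m = l powr (1 / q)"
  have "m > 0" using \<open>l > 0\<close> by (simp add: m_def)
  have "0 < p * q" using assms(1,2) by simp
  then have denom: "p * q + p - 1 > 0" using \<open>p \<ge> 1\<close> by linarith
  have "(p - 1) * ln n \<le> (p - 1) * (ln A + ln m - ln La)"
  proof (cases "p = 1")
    case False
    with closed_loop_ln(2)[OF assms(1,3,4) closed_loop] have "n > 0" by simp
    with n_le have "ln n \<le> ln (A * m / La)" by (simp add: m_def)
    then show ?thesis using \<open>A > 0\<close> \<open>m > 0\<close> \<open>La > 0\<close> \<open>p \<ge> 1\<close>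
      by (intro mult_left_mono) (simp_all add: ln_div ln_mult)
  qed simp
  moreover have "p * ln l = p * q * ln m" using \<open>l > 0\<close> \<open>q > 0\<close> by (simp add: m_def)
  ultimately have "- (p * q * ln m) \<le> (p - 1) * (ln A + ln m - ln La)"
    using closed_loop_ln(1)[OF assms(1,3,4) closed_loop] by linarith
  then have "(p - 1) * (ln La - ln A) \<le> (p * q + p - 1) * ln m"
    by (simp add: algebra_simps)
  then have "(p - 1) / (p * q + p - 1) * ln (La / A) \<le> ln m"
    using denom \<open>A > 0\<close> \<open>La > 0\<close> by (simp add: ln_div field_simps)
  then have "exp ((p - 1) / (p * q + p - 1) * ln (La / A)) \<le> exp (ln m)" by simp
  then show ?thesis
    unfolding m_def[symmetric] using \<open>A > 0\<close> \<open>La > 0\<close> \<open>m > 0\<close> by (simp add: powr_def)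
qed

lemma closed_loop_velocity_powr:
  fixes l n p q :: real
  assumes "p \<ge> 1" "q > 0" "l > 0" "n > 0" and closed_loop: "l powr p * rpow n (p - 1) = 1"
  shows "n powr ((p - 1) / (p * q)) = l powr (- 1 / q)"
proof -
  have "(p - 1) * ln n = - p * ln l"
    using closed_loop_ln(1)[OF assms(1,3) _ closed_loop] \<open>n > 0\<close> by simp
  then have "(p - 1) / (p * q) * ln n = (- p * ln l) / (p * q)" by simp
  also have "\<dots> = - 1 / q * ln l" using assms(1) by simp
  finally have "(p - 1) / (p * q) * ln n = - 1 / q * ln l" .
  with \<open>l > 0\<close> \<open>n > 0\<close> show ?thesis by (simp add: powr_def)
qed

section \<open>Convex functions and weak convergence in Hilbert spaces\<close>

lemma convex_on_gradient_inequality: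
  fixes f :: "'a::real_inner \<Rightarrow> real"
  assumes convex: "convex_on UNIV f" and deriv: "(f has_derivative (\<lambda>h. g \<bullet> h)) (at x)"
  shows "f x + g \<bullet> (z - x) \<le> f z"
proof -
  define \<phi> where "\<phi> s = f (x + s *\<^sub>R (z - x))" for s
  have "convex_on UNIV \<phi>"
  proof (rule convex_onI)
    fix t u v :: real assume "0 < t" "t < 1"
    have "x + ((1 - t) * u + t * v) *\<^sub>R (z - x)
        = (1 - t) *\<^sub>R (x + u *\<^sub>R (z - x)) + t *\<^sub>R (x + v *\<^sub>R (z - x))"
      by (simp add: algebra_simps)
    then show "\<phi> ((1 - t) *\<^sub>R u + t *\<^sub>R v) \<le> (1 - t) * \<phi> u + t * \<phi> v"
      unfolding \<phi>_def using convex_onD[OF convex, of t] \<open>0 < t\<close> \<open>t < 1\<close> by auto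
  qed simp
  moreover have "(\<phi> has_real_derivative g \<bullet> (z - x)) (at 0)"
  proof -
    have "((\<lambda>s. x + s *\<^sub>R (z - x)) has_derivative (\<lambda>s. s *\<^sub>R (z - x))) (at 0)"
      by (auto intro!: derivative_eq_intros)
    from has_derivative_compose[OF this, of f "\<lambda>h. g \<bullet> h"] deriv
    have "(\<phi> has_derivative (\<lambda>s. g \<bullet> (s *\<^sub>R (z - x)))) (at 0)"
      unfolding \<phi>_def by (simp add: o_def)
    moreover have "(\<lambda>s. g \<bullet> (s *\<^sub>R (z - x))) = (*) (g \<bullet> (z - x))" by (auto simp: fun_eq_iff)
    ultimately show ?thesis by (simp add: has_field_derivative_def)
  qed
  ultimately have "\<phi> 1 - \<phi> 0 \<ge> g \<bullet> (z - x) * (1 - 0)"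
    by (intro convex_on_imp_above_tangent[where A = UNIV]) auto
  then show ?thesis unfolding \<phi>_def by simp
qed

lemma convex_on_gradient_monotone:
  fixes f :: "'a::real_inner \<Rightarrow> real"
  assumes "convex_on UNIV f" and "\<And>x. (f has_derivative (\<lambda>h. G x \<bullet> h)) (at x)"
  shows "0 \<le> (G x - G z) \<bullet> (x - z)"
  using convex_on_gradient_inequality[OF assms(1) assms(2)[of x], of z]
    convex_on_gradient_inequality[OF assms(1) assms(2)[of z], of x]
  by (simp add: inner_diff_left inner_diff_right)

text \<open>A discrete form of \<open>(\<parallel>u\<parallel>\<^sup>2)' = 2 u \<bullet> u' \<le> 0\<close> along \<open>x' = - a u\<close>, \<open>u = G x\<close> with \<open>G\<close> monotone:
  \<open>d\<close> is an increment of \<open>x\<close> over a step of length \<open>h\<close>, and \<open>u\<^sub>0, u\<^sub>1\<close> are the values of \<open>G\<close> at its ends.\<close>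
lemma norm_sq_increment_if_monotone:
  fixes u0 u1 d :: "'a::real_inner"
  assumes mono: "0 \<le> (u1 - u0) \<bullet> d"
    and lin: "norm (d + (h * a) *\<^sub>R u1) \<le> h * \<eta>"
    and lip: "norm (u1 - u0) \<le> C * h"
    and "0 < h" "0 < a_min" "a_min \<le> a" "0 \<le> C"
  shows "norm u1 ^ 2 - norm u0 ^ 2 \<le> 2 * C * \<eta> * h / a_min"
proof -
  define w where "w = u1 - u0"
  have "0 \<le> h * \<eta>" using lin by (rule order_trans[OF norm_ge_zero])
  then have "0 \<le> \<eta>" using \<open>0 < h\<close> by (simp add: zero_le_mult_iff)
  have "0 \<le> w \<bullet> d" using mono by (simp add: w_def)
  also have "w \<bullet> d = - (h * a) * (w \<bullet> u1) + w \<bullet> (d + (h * a) *\<^sub>R u1)" by (simp add: inner_add_right)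
  also have "\<dots> \<le> - (h * a) * (w \<bullet> u1) + norm w * (h * \<eta>)"
    using norm_cauchy_schwarz[of w "d + (h * a) *\<^sub>R u1"] mult_left_mono[OF lin norm_ge_zero[of w]] by simp
  finally have "h * (a * (w \<bullet> u1)) \<le> h * (norm w * \<eta>)" by (simp add: algebra_simps)
  then have "a * (w \<bullet> u1) \<le> norm w * \<eta>" using \<open>0 < h\<close> by simp
  also have "\<dots> \<le> C * h * \<eta>" using lip \<open>0 \<le> \<eta>\<close> by (simp add: w_def mult_right_mono)
  finally have a_le: "a * (w \<bullet> u1) \<le> C * h * \<eta>" .
  have "a_min * (w \<bullet> u1) \<le> C * h * \<eta>"
  proof (cases "w \<bullet> u1 \<le> 0")
    case True
    moreover have "0 \<le> C * h * \<eta>" using \<open>0 \<le> C\<close> \<open>0 < h\<close> \<open>0 \<le> \<eta>\<close> by simp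
    ultimately show ?thesis using \<open>0 < a_min\<close> by (meson less_imp_le mult_nonneg_nonpos order_trans)
  next
    case False
    then have "a_min * (w \<bullet> u1) \<le> a * (w \<bullet> u1)" using \<open>a_min \<le> a\<close> by simp
    with a_le show ?thesis by linarith
  qed
  then have "w \<bullet> u1 \<le> C * \<eta> * h / a_min"
    using \<open>0 < a_min\<close> by (simp add: pos_le_divide_eq mult.commute mult.left_commute)
  moreover have "norm u1 ^ 2 - norm u0 ^ 2 = 2 * (w \<bullet> u1) - norm w ^ 2"
    unfolding w_def by (simp add: power2_norm_eq_inner inner_diff_left inner_diff_right inner_commute)
  ultimately have "norm u1 ^ 2 - norm u0 ^ 2 \<le> 2 * (C * \<eta> * h / a_min)"
    using zero_le_power2[of "norm w"] by linarith
  then show ?thesis by simp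
qed

lemma convex_on_sublevel:
  assumes "convex_on UNIV f"
  shows "convex {x. f x \<le> c}"
proof (rule convexI)
  fix a b and u v :: real
  assume "a \<in> {x. f x \<le> c}" "b \<in> {x. f x \<le> c}" "0 \<le> u" "0 \<le> v" "u + v = 1"
  then have "f (u *\<^sub>R a + v *\<^sub>R b) \<le> u * f a + v * f b"
    using convex_onD[OF assms, of v a b] by (simp add: eq_diff_eq[symmetric])
  also have "\<dots> \<le> u * c + v * c"
    using \<open>0 \<le> u\<close> \<open>0 \<le> v\<close> \<open>a \<in> _\<close> \<open>b \<in> _\<close> by (intro add_mono mult_left_mono) auto
  finally show "u *\<^sub>R a + v *\<^sub>R b \<in> {x. f x \<le> c}" using \<open>u + v = 1\<close> by (simp flip: distrib_right)
qed

lemma norm_diff_sq_le_if_norm_lower_bound: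
  fixes k k' :: "'a::real_inner"
  assumes "convex K" "k \<in> K" "k' \<in> K" and lower: "\<And>x. x \<in> K \<Longrightarrow> d \<le> norm x" and "0 \<le> d"
  shows "norm (k - k')^2 \<le> 2 * norm k ^ 2 + 2 * norm k' ^ 2 - 4 * d^2"
proof -
  have "(1/2) *\<^sub>R (k + k') \<in> K"
    using convexD[OF assms(1-3), of "1/2" "1/2"] by (simp add: scaleR_add_right)
  then have "d \<le> norm ((1/2) *\<^sub>R (k + k'))" by (rule lower)
  then have "(2 * d)^2 \<le> norm (k + k')^2" using \<open>0 \<le> d\<close> by (intro power_mono) auto
  then have "4 * d^2 \<le> norm (k + k')^2" by (simp add: power_mult_distrib)
  moreover have "norm (k - k')^2 = 2 * norm k ^ 2 + 2 * norm k' ^ 2 - norm (k + k')^2"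
    by (simp add: power2_norm_eq_inner inner_add inner_diff inner_commute)
  ultimately show ?thesis by linarith
qed

lemma Cauchy_if_norm_diff_sq_le:
  fixes x :: "nat \<Rightarrow> 'a::real_normed_vector"
  assumes "a \<longlonglongrightarrow> 0" and bound: "\<And>m n. norm (x m - x n)^2 \<le> a m + a n"
  shows "Cauchy x"
proof (rule metric_CauchyI)
  fix e :: real assume "0 < e"
  then have "\<forall>\<^sub>F n in sequentially. a n < e^2 / 2"
    using tendstoD[OF assms(1), of "e^2 / 2"] by (auto simp: dist_real_def elim: eventually_mono)
  then obtain M where M: "\<And>n. n \<ge> M \<Longrightarrow> a n < e^2 / 2" unfolding eventually_sequentially by blast
  have "dist (x m) (x n) < e" if "m \<ge> M" "n \<ge> M" for m n
  proof -
    have "norm (x m - x n)^2 < e^2" using bound[of m n] M[OF that(1)] M[OF that(2)] by linarith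
    then show ?thesis using \<open>0 < e\<close> by (simp add: dist_norm power_less_imp_less_base)
  qed
  then show "\<exists>M. \<forall>m\<ge>M. \<forall>n\<ge>M. dist (x m) (x n) < e" by blast
qed

lemma closed_convex_has_min_norm:
  fixes K :: "'a::{real_inner,complete_space} set"
  assumes "closed K" "convex K" "K \<noteq> {}"
  shows "\<exists>p\<in>K. \<forall>k\<in>K. norm p \<le> norm k"
proof -
  define d where "d = Inf (norm ` K)"
  have bdd: "bdd_below (norm ` K)" by (rule bdd_belowI[of _ 0]) auto
  have d_le: "d \<le> norm k" if "k \<in> K" for k
    unfolding d_def using bdd that by (simp add: cInf_lower)
  have "0 \<le> d" unfolding d_def using \<open>K \<noteq> {}\<close> by (auto intro: cInf_greatest)
  have "\<exists>k\<in>K. norm k < d + 1 / Suc n" for n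
  proof -
    have "Inf (norm ` K) < d + 1 / Suc n" by (simp add: d_def)
    then show ?thesis using \<open>K \<noteq> {}\<close> bdd by (simp add: cInf_less_iff)
  qed
  then obtain k where k: "\<And>n. k n \<in> K" "\<And>n. norm (k n) < d + 1 / Suc n" by metis
  have "(\<lambda>n. norm (k n)) \<longlonglongrightarrow> d"
  proof (rule tendsto_sandwich)
    show "\<forall>\<^sub>F n in sequentially. d \<le> norm (k n)" using d_le k(1) by simp
    show "\<forall>\<^sub>F n in sequentially. norm (k n) \<le> d + 1 / Suc n" using k(2) by (simp add: less_imp_le)
    show "(\<lambda>n. d + 1 / Suc n) \<longlonglongrightarrow> d"
      using tendsto_add[OF tendsto_const LIMSEQ_inverse_real_of_nat] by (simp add: inverse_eq_divide)
  qed simp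
  then have "(\<lambda>n. 2 * (norm (k n)^2 - d^2)) \<longlonglongrightarrow> 2 * (d^2 - d^2)"
    by (intro tendsto_intros)
  then have norm_sq: "(\<lambda>n. 2 * (norm (k n)^2 - d^2)) \<longlonglongrightarrow> 0" by simp
  have "Cauchy k"
  proof (rule Cauchy_if_norm_diff_sq_le[OF norm_sq])
    show "norm (k m - k n)^2 \<le> 2 * (norm (k m)^2 - d^2) + 2 * (norm (k n)^2 - d^2)" for m n
      using norm_diff_sq_le_if_norm_lower_bound[OF assms(2) k(1) k(1) d_le \<open>0 \<le> d\<close>] by simp
  qed
  then obtain p where p: "k \<longlonglongrightarrow> p" using convergent_eq_Cauchy convergent_def by blast
  have "p \<in> K" using closed_sequentially[OF assms(1) _ p] k(1) by blast
  moreover have "norm p = d" using tendsto_norm[OF p] \<open>(\<lambda>n. norm (k n)) \<longlonglongrightarrow> d\<close> by (rule LIMSEQ_unique)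
  ultimately show ?thesis using d_le by auto
qed

lemma decseq_closed_convex_Inter_nonempty:
  fixes K :: "nat \<Rightarrow> 'a::{real_inner,complete_space} set"
  assumes closed: "\<And>n. closed (K n)" and convex: "\<And>n. convex (K n)" and "decseq K"
    and bounded: "\<And>n. \<exists>k\<in>K n. norm k \<le> B"
  shows "(\<Inter>n. K n) \<noteq> {}"
proof -
  have "\<forall>n. \<exists>p\<in>K n. \<forall>k\<in>K n. norm p \<le> norm k"
    using closed_convex_has_min_norm[OF closed convex] bounded by blast
  then obtain p where p: "\<And>n. p n \<in> K n" and p_min: "\<And>n k. k \<in> K n \<Longrightarrow> norm (p n) \<le> norm k"
    by metis
  have p_in: "p m \<in> K n" if "n \<le> m" for m n
    using p[of m] decseqD[OF \<open>decseq K\<close> that] by blast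
  define d where "d n = norm (p n)^2" for n
  define D where "D = (SUP n. d n)"
  have "incseq d"
    unfolding incseq_def d_def using p_min[OF p_in] by (simp add: power_mono)
  moreover have bdd: "bdd_above (range d)"
  proof (rule bdd_aboveI2)
    fix n
    obtain k where "k \<in> K n" "norm k \<le> B" using bounded by blast
    then show "d n \<le> B^2" unfolding d_def using p_min by (meson norm_ge_zero order_trans power_mono)
  qed
  ultimately have "d \<longlonglongrightarrow> D" unfolding D_def by (intro LIMSEQ_incseq_SUP)
  then have "(\<lambda>n. 2 * (D - d n)) \<longlonglongrightarrow> 2 * (D - D)" by (intro tendsto_intros)
  then have gap: "(\<lambda>n. 2 * (D - d n)) \<longlonglongrightarrow> 0" by simp
  have d_le_D: "d n \<le> D" for n using bdd by (simp add: D_def cSUP_upper)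
  have step: "norm (p m - p n)^2 \<le> 2 * (d m - d n)" if "n \<le> m" for m n
    using norm_diff_sq_le_if_norm_lower_bound[OF convex p_in[OF that] p p_min[where n = n]]
    by (simp add: d_def)
  have "Cauchy p"
  proof (rule Cauchy_if_norm_diff_sq_le[OF gap])
    fix m n
    have "norm (p m - p n)^2 \<le> 2 * (d m - d n) \<or> norm (p m - p n)^2 \<le> 2 * (d n - d m)"
      using step[of n m] step[of m n] by (cases "n \<le> m") (auto simp: norm_minus_commute)
    then show "norm (p m - p n)^2 \<le> 2 * (D - d m) + 2 * (D - d n)"
      using d_le_D[of m] d_le_D[of n] by (auto simp: algebra_simps)
  qed
  then obtain w where "p \<longlonglongrightarrow> w" using convergent_eq_Cauchy convergent_def by blast
  have "w \<in> K n" for n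
  proof (rule Lim_in_closed_set[OF closed _ _ \<open>p \<longlonglongrightarrow> w\<close>])
    show "\<forall>\<^sub>F m in sequentially. p m \<in> K n" unfolding eventually_sequentially using p_in by blast
  qed simp
  then show ?thesis by blast
qed

text \<open>A convex cluster point of \<open>z\<close> lies in the closed convex hull of every tail of \<open>z\<close>.
  Every weak cluster point is one, and the Opial argument below needs nothing more, so the weak
  topology is never introduced.\<close>
definition convex_cluster_point :: "(nat \<Rightarrow> 'a::real_normed_vector) \<Rightarrow> 'a \<Rightarrow> bool" where
  "convex_cluster_point z w \<longleftrightarrow>
     (\<forall>C. closed C \<longrightarrow> convex C \<longrightarrow> (\<forall>\<^sub>F n in sequentially. z n \<in> C) \<longrightarrow> w \<in> C)"

lemma bounded_imp_convex_cluster_point: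
  fixes z :: "nat \<Rightarrow> 'a::{real_inner,complete_space}"
  assumes "bounded (range z)"
  shows "\<exists>w. convex_cluster_point z w"
proof -
  define K where "K n = closure (convex hull (z ` {n..}))" for n
  obtain B where B: "\<And>n. norm (z n) \<le> B" using assms by (auto simp: bounded_iff)
  have z_in_K: "z n \<in> K n" for n
    using closure_subset hull_inc[of "z n" "z ` {n..}"] unfolding K_def by auto
  have "decseq K"
    unfolding decseq_def K_def by (intro allI impI closure_mono hull_mono image_mono) auto
  have "(\<Inter>n. K n) \<noteq> {}"
  proof (rule decseq_closed_convex_Inter_nonempty[OF _ _ \<open>decseq K\<close>])
    show "closed (K n)" "convex (K n)" for n by (simp_all add: K_def convex_closure)
    show "\<exists>k\<in>K n. norm k \<le> B" for n using z_in_K B by blast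
  qed
  then obtain w where w: "\<And>n. w \<in> K n" by blast
  have "w \<in> C" if "closed C" "convex C" and eventually_in: "\<forall>\<^sub>F n in sequentially. z n \<in> C" for C
  proof -
    obtain N where "\<And>n. n \<ge> N \<Longrightarrow> z n \<in> C" using eventually_in unfolding eventually_sequentially by blast
    then have "convex hull (z ` {N..}) \<subseteq> C" using \<open>convex C\<close> by (intro hull_minimal) auto
    then have "K N \<subseteq> C" unfolding K_def using \<open>closed C\<close> by (rule closure_minimal)
    with w show ?thesis by blast
  qed
  then show ?thesis unfolding convex_cluster_point_def by blast
qed

lemma convex_cluster_point_inner_tendsto:
  fixes z :: "nat \<Rightarrow> 'a::real_inner"
  assumes "convex_cluster_point z w" and "(\<lambda>n. z n \<bullet> d) \<longlonglongrightarrow> l"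
  shows "w \<bullet> d = l"
proof -
  have "\<bar>w \<bullet> d - l\<bar> \<le> e" if "e > 0" for e
  proof -
    define C where "C = {x. d \<bullet> x \<le> l + e} \<inter> {x. d \<bullet> x \<ge> l - e}"
    have "closed C" "convex C"
      by (simp_all add: C_def closed_Int closed_halfspace_le closed_halfspace_ge
          convex_Int convex_halfspace_le convex_halfspace_ge)
    moreover have "\<forall>\<^sub>F n in sequentially. z n \<in> C"
      using tendstoD[OF assms(2) \<open>e > 0\<close>]
      by eventually_elim (auto simp: C_def dist_real_def inner_commute abs_le_iff)
    ultimately have "w \<in> C" using assms(1) unfolding convex_cluster_point_def by blast
    then show ?thesis by (auto simp: C_def inner_commute abs_le_iff)
  qed
  then show ?thesis using dense_eq0_I[of "w \<bullet> d - l"] by simp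
qed

lemma convex_cluster_point_in_if_eventually:
  assumes "convex_cluster_point (y \<circ> s) w" "filterlim s at_top sequentially"
    and "closed C" "convex C" and eventually_in: "\<forall>\<^sub>F t in at_top. y t \<in> C"
  shows "w \<in> C"
proof -
  have "\<forall>\<^sub>F n in sequentially. (y \<circ> s) n \<in> C"
    using assms(2)[unfolded filterlim_iff, rule_format, OF eventually_in] by simp
  with assms(1,3,4) show ?thesis unfolding convex_cluster_point_def by blast
qed

lemma convex_cluster_points_eq:
  fixes y :: "real \<Rightarrow> 'a::real_inner"
  assumes w1: "convex_cluster_point (y \<circ> s1) w1" "filterlim s1 at_top sequentially"
    and w2: "convex_cluster_point (y \<circ> s2) w2" "filterlim s2 at_top sequentially"
    and "((\<lambda>t. norm (y t - w1)^2) \<longlongrightarrow> L1) at_top" "((\<lambda>t. norm (y t - w2)^2) \<longlongrightarrow> L2) at_top"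
  shows "w1 = w2"
proof -
  have "((\<lambda>t. (norm (y t - w1)^2 - norm (y t - w2)^2 - norm w1^2 + norm w2^2) / 2) \<longlongrightarrow>
      (L1 - L2 - norm w1^2 + norm w2^2) / 2) at_top"
    using assms(5,6) by (intro tendsto_intros) simp_all
  moreover have "(norm (y t - w1)^2 - norm (y t - w2)^2 - norm w1^2 + norm w2^2) / 2 = y t \<bullet> (w2 - w1)" for t
    by (simp add: power2_norm_eq_inner inner_diff inner_commute)
  ultimately have lim: "((\<lambda>t. y t \<bullet> (w2 - w1)) \<longlongrightarrow> (L1 - L2 - norm w1^2 + norm w2^2) / 2) at_top"
    by simp
  have "w \<bullet> (w2 - w1) = (L1 - L2 - norm w1^2 + norm w2^2) / 2"
    if "convex_cluster_point (y \<circ> s) w" "filterlim s at_top sequentially" for s w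
    using convex_cluster_point_inner_tendsto[OF that(1)] filterlim_compose[OF lim that(2)] by simp
  from this[OF w1] this[OF w2] have "(w2 - w1) \<bullet> (w2 - w1) = 0" by (simp add: inner_diff_left)
  then show ?thesis by simp
qed

lemma weak_conv_if_convex_cluster_points_eq:
  fixes y :: "real \<Rightarrow> 'a::{real_inner,complete_space}"
  assumes bounded: "bounded (y ` {T..})"
    and unique: "\<And>s w. filterlim s at_top sequentially \<Longrightarrow> (\<And>n. s n \<ge> T) \<Longrightarrow>
                   convex_cluster_point (y \<circ> s) w \<Longrightarrow> w = w0"
  shows "weak_conv_at_top y w0"
  unfolding weak_conv_at_top_def
proof (rule allI, rule ccontr)
  fix v assume "\<not> ((\<lambda>t. y t \<bullet> v) \<longlongrightarrow> w0 \<bullet> v) at_top"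
  then obtain e where "e > 0" and "\<not> (\<forall>\<^sub>F t in at_top. dist (y t \<bullet> v) (w0 \<bullet> v) < e)"
    unfolding tendsto_iff by blast
  then have "\<forall>n. \<exists>t. t \<ge> T + real n \<and> e \<le> \<bar>y t \<bullet> v - w0 \<bullet> v\<bar>"
    unfolding eventually_at_top_linorder dist_real_def by (auto simp: not_less)
  from choice[OF this] obtain s
    where s: "\<And>n. s n \<ge> T + real n" and far: "\<And>n. e \<le> \<bar>y (s n) \<bullet> v - w0 \<bullet> v\<bar>"
    by blast
  have "s n \<ge> T" for n using s[of n] by simp
  have s_lim: "filterlim s at_top sequentially"
    by (rule filterlim_at_top_mono[OF filterlim_tendsto_add_at_top[OF tendsto_const[of T]
          filterlim_real_sequentially]]) (use s in auto)
  obtain B where B: "\<And>t. t \<ge> T \<Longrightarrow> norm (y t) \<le> B" using bounded by (auto simp: bounded_iff)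
  have "norm (y (s n) \<bullet> v) \<le> B * norm v" for n
    using Cauchy_Schwarz_ineq2[of "y (s n)" v] mult_right_mono[OF B[OF \<open>s n \<ge> T\<close>], of "norm v"] by simp
  then have "bounded (range (\<lambda>n. y (s n) \<bullet> v))" by (intro boundedI) auto
  then obtain l r where "strict_mono r" and lim: "((\<lambda>n. y (s n) \<bullet> v) \<circ> r) \<longlonglongrightarrow> l"
    using bounded_imp_convergent_subsequence by blast
  have "bounded (range (y \<circ> (s \<circ> r)))"
    using \<open>\<And>n. s n \<ge> T\<close> by (intro bounded_subset[OF bounded]) auto
  then obtain w where w: "convex_cluster_point (y \<circ> (s \<circ> r)) w"
    using bounded_imp_convex_cluster_point by blast
  have "filterlim (s \<circ> r) at_top sequentially"
    using filterlim_compose[OF s_lim filterlim_subseq[OF \<open>strict_mono r\<close>]] by (simp add: o_def)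
  then have "w = w0" using unique[OF _ _ w] \<open>\<And>n. s n \<ge> T\<close> by simp
  moreover have "w \<bullet> v = l" using convex_cluster_point_inner_tendsto[OF w] lim by (simp add: o_def)
  moreover have "e \<le> \<bar>l - w0 \<bullet> v\<bar>"
  proof (rule tendsto_lowerbound)
    show "(\<lambda>n. \<bar>y (s (r n)) \<bullet> v - w0 \<bullet> v\<bar>) \<longlonglongrightarrow> \<bar>l - w0 \<bullet> v\<bar>"
      using lim by (intro tendsto_intros) (simp add: o_def)
  qed (use far in auto)
  ultimately show False using \<open>e > 0\<close> by simp
qed

text \<open>The usual hypothesis that weak cluster points of the trajectory lie in
  \<open>S\<close> is replaced by the stronger condition that \<open>S\<close> contains every point lying in all
  closed convex sets that eventually contain the trajectory.\<close>
lemma weak_conv_Opial: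
  fixes y :: "real \<Rightarrow> 'a::{real_inner,complete_space}"
  assumes dist_conv: "\<And>x. x \<in> S \<Longrightarrow> \<exists>L. ((\<lambda>t. norm (y t - x)^2) \<longlongrightarrow> L) at_top"
    and bounded: "bounded (y ` {T..})"
    and asymptotic_in_S: "\<And>w. (\<And>C. closed C \<Longrightarrow> convex C \<Longrightarrow> (\<forall>\<^sub>F t in at_top. y t \<in> C) \<Longrightarrow> w \<in> C)
                            \<Longrightarrow> w \<in> S"
  shows "\<exists>x\<in>S. weak_conv_at_top y x"
proof -
  have in_S: "w \<in> S" if "convex_cluster_point (y \<circ> s) w" "filterlim s at_top sequentially" for s w
    using asymptotic_in_S convex_cluster_point_in_if_eventually[OF that] by blast
  define s0 where "s0 n = T + real n" for n
  have s0_lim: "filterlim s0 at_top sequentially"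
    unfolding s0_def by (rule filterlim_tendsto_add_at_top[OF tendsto_const filterlim_real_sequentially])
  have "bounded (range (y \<circ> s0))" by (intro bounded_subset[OF bounded]) (auto simp: s0_def)
  then obtain w0 where w0: "convex_cluster_point (y \<circ> s0) w0" using bounded_imp_convex_cluster_point by blast
  have "weak_conv_at_top y w0"
  proof (rule weak_conv_if_convex_cluster_points_eq[OF bounded])
    fix s w assume s_lim: "filterlim s at_top sequentially" and w: "convex_cluster_point (y \<circ> s) w"
    obtain L where "((\<lambda>t. norm (y t - w)^2) \<longlongrightarrow> L) at_top" using dist_conv[OF in_S[OF w s_lim]] ..
    moreover obtain L0 where "((\<lambda>t. norm (y t - w0)^2) \<longlongrightarrow> L0) at_top" using dist_conv[OF in_S[OF w0 s0_lim]] ..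
    ultimately show "w = w0" by (rule convex_cluster_points_eq[OF w s_lim w0 s0_lim])
  qed
  with in_S[OF w0 s0_lim] show ?thesis by blast
qed

section \<open>The closed-loop trajectory\<close>

locale closed_loop_trajectory =
  fixes f :: "'a::{real_inner, complete_space} \<Rightarrow> real"
    and gradf :: "'a \<Rightarrow> 'a"
    and y y' :: "real \<Rightarrow> 'a"
    and lam :: "real \<Rightarrow> real"
    and t0 q p :: real
  assumes f_convex: "convex_on UNIV f"
    and f_grad: "\<And>x. (f has_derivative (\<lambda>h. gradf x \<bullet> h)) (at x)"
    and grad_cont: "continuous_on UNIV gradf"
    and S_nonempty: "{x. \<forall>z. f x \<le> f z} \<noteq> {}"
    and grad_lip: "\<And>B. bounded B \<Longrightarrow> \<exists>L. L-lipschitz_on B gradf"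
    and t0_pos: "t0 > 0" and q_pos: "q > 0" and p_ge: "p \<ge> 1"
    and y_deriv: "\<And>t. t \<ge> t0 \<Longrightarrow> (y has_vector_derivative y' t) (at t within {t0..})"
    and y'_cont: "continuous_on {t0..} y'"
    and lam_cont: "continuous_on {t0..} lam"
    and lam_pos: "\<And>t. t \<ge> t0 \<Longrightarrow> lam t > 0"
    and ode: "\<And>t. t \<ge> t0 \<Longrightarrow>
       y' t + vector_derivative (tau_fun t0 q lam) (at t within {t0..}) *\<^sub>R gradf (y t) = 0"
    and closed_loop: "\<And>t. t \<ge> t0 \<Longrightarrow> lam t powr p * rpow (norm (y' t)) (p - 1) = 1"
begin

abbreviation S :: "'a set" where "S \<equiv> {x. \<forall>z. f x \<le> f z}"
abbreviation tau :: "real \<Rightarrow> real" where "tau \<equiv> tau_fun t0 q lam"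
abbreviation g :: "real \<Rightarrow> 'a" where "g t \<equiv> gradf (y t)"

definition x_min :: 'a where "x_min = (SOME x. x \<in> S)"
definition Lam :: "real \<Rightarrow> real" where "Lam t = t0 + integral {t0..t} (\<lambda>r. lam r powr (1 / q))"
text \<open>\<open>dtau = \<tau>'\<close>: from \<open>\<tau> = Lam\<^sup>q / q\<^sup>q\<close> and \<open>Lam' = \<lambda>\<^sup>1\<^sup>/\<^sup>q\<close> one gets \<open>\<tau>' = q \<tau> Lam' / Lam\<close>.\<close>
definition dtau :: "real \<Rightarrow> real" where "dtau t = q * tau t * lam t powr (1 / q) / Lam t"
definition E :: "real \<Rightarrow> real" where "E t = f (y t) - f x_min"
definition V :: "real \<Rightarrow> real" where "V t = tau t * E t + norm (y t - x_min)^2 / 2"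

lemma f_x_min_le: "f x_min \<le> f z"
  using someI_ex[of "\<lambda>x. x \<in> S"] S_nonempty unfolding x_min_def by auto

lemma x_min_in_S: "x_min \<in> S"
  using f_x_min_le by simp

lemma INF_eq_f_x_min: "(INF x. f x) = f x_min"
  using f_x_min_le by (intro antisym cINF_lower cINF_greatest bdd_belowI) auto

lemma f_continuous: "continuous_on UNIV f"
  using has_derivative_continuous[OF f_grad] by (simp add: continuous_on_eq_continuous_within)

lemma lam_root_continuous: "continuous_on {t0..} (\<lambda>r. lam r powr (1 / q))"
  using lam_pos by (intro continuous_intros lam_cont) force

lemma Lam_deriv: "t \<ge> t0 \<Longrightarrow> (Lam has_real_derivative lam t powr (1 / q)) (at t within {t0..})"
proof -
  assume "t \<ge> t0"
  have "continuous_on {t0..t + 1} (\<lambda>r. lam r powr (1 / q))"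
    by (rule continuous_on_subset[OF lam_root_continuous]) auto
  from integral_has_real_derivative[OF this, of t] \<open>t \<ge> t0\<close>
  have "((\<lambda>s. integral {t0..s} (\<lambda>r. lam r powr (1 / q))) has_real_derivative lam t powr (1 / q))
      (at t within {t0..t + 1})" by simp
  moreover have "at t within {t0..} = at t within {t0..t + 1}"
    by (rule at_within_nhd[where S = "{t - 1 <..< t + 1}"]) auto
  ultimately have "((\<lambda>s. t0 + integral {t0..s} (\<lambda>r. lam r powr (1 / q))) has_real_derivative
      0 + lam t powr (1 / q)) (at t within {t0..})"
    by (intro DERIV_add DERIV_const) simp
  then show ?thesis by (simp add: Lam_def[abs_def])
qed

lemma Lam_ge: "t \<ge> t0 \<Longrightarrow> t0 \<le> Lam t"
  unfolding Lam_def using lam_pos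
  by (auto intro!: integral_nonneg integrable_continuous_real continuous_on_subset[OF lam_root_continuous])

lemma Lam_t0: "Lam t0 = t0"
  by (simp add: Lam_def)

lemma Lam_pos: "t \<ge> t0 \<Longrightarrow> 0 < Lam t"
  using Lam_ge t0_pos by force

lemma tau_eq: "tau t = Lam t powr q / q powr q"
  by (simp add: tau_fun_def Lam_def)

lemma tau_pos: "t \<ge> t0 \<Longrightarrow> 0 < tau t"
  using Lam_pos[of t] q_pos by (simp add: tau_eq)

lemma dtau_pos: "t \<ge> t0 \<Longrightarrow> 0 < dtau t"
  using q_pos tau_pos[of t] Lam_pos[of t] lam_pos[of t] by (simp add: dtau_def)

lemma tau_deriv: "t \<ge> t0 \<Longrightarrow> (tau has_real_derivative dtau t) (at t within {t0..})"
proof -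
  assume "t \<ge> t0"
  have "((\<lambda>s. Lam s powr q / q powr q) has_real_derivative
      q * Lam t powr (q - 1) * lam t powr (1 / q) / q powr q) (at t within {t0..})"
    by (intro DERIV_cdivide DERIV_chain'[OF Lam_deriv has_real_derivative_powr] \<open>t \<ge> t0\<close> Lam_pos)
  moreover have "q * Lam t powr (q - 1) * lam t powr (1 / q) / q powr q = dtau t"
    using Lam_pos[OF \<open>t \<ge> t0\<close>] by (simp add: dtau_def tau_eq powr_diff field_simps)
  ultimately show ?thesis unfolding tau_eq[abs_def] by simp
qed

lemma y'_eq: "t \<ge> t0 \<Longrightarrow> y' t = - dtau t *\<^sub>R g t"
proof -
  assume "t \<ge> t0"
  have "t \<in> closure {t<..}" by simp
  moreover have "closure {t<..} \<subseteq> closure ({t0..} - {t})" using \<open>t \<ge> t0\<close> by (intro closure_mono) auto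
  ultimately have "at t within {t0..} \<noteq> bot" by (auto simp: at_within_eq_bot_iff)
  moreover have "(tau has_vector_derivative dtau t) (at t within {t0..})"
    using tau_deriv[OF \<open>t \<ge> t0\<close>] unfolding has_real_derivative_iff_has_vector_derivative .
  ultimately have "vector_derivative tau (at t within {t0..}) = dtau t"
    by (rule vector_derivative_within)
  with ode[OF \<open>t \<ge> t0\<close>] show ?thesis by (simp add: add_eq_0_iff)
qed

lemma y_continuous: "continuous_on {t0..} y"
  unfolding continuous_on_eq_continuous_within
  by (auto intro: has_vector_derivative_continuous[OF y_deriv])

lemma g_continuous: "continuous_on {t0..} g"
  by (rule continuous_on_compose2[OF grad_cont y_continuous]) auto

lemma tau_continuous: "continuous_on {t0..} tau"
  unfolding continuous_on_eq_continuous_within by (auto intro: DERIV_continuous[OF tau_deriv])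

lemma dtau_continuous: "continuous_on {t0..} dtau"
proof -
  have "continuous_on {t0..} Lam"
    unfolding continuous_on_eq_continuous_within by (auto intro: DERIV_continuous[OF Lam_deriv])
  then show ?thesis
    unfolding dtau_def using Lam_pos
    by (intro continuous_on_divide continuous_on_mult continuous_on_const tau_continuous
        lam_root_continuous) force+
qed


lemma gap_le_inner: "f (y t) - f x \<le> (y t - x) \<bullet> g t"
  using convex_on_gradient_inequality[OF f_convex f_grad, of "y t" x]
  by (simp add: inner_commute inner_diff_left inner_diff_right)

lemma E_nonneg: "0 \<le> E t"
  using f_x_min_le by (simp add: E_def)

lemma E_deriv: "t \<ge> t0 \<Longrightarrow> (E has_real_derivative - dtau t * norm (g t)^2) (at t within {t0..})"
proof -
  assume "t \<ge> t0"
  have "((\<lambda>t. f (y t)) has_derivative (\<lambda>h. g t \<bullet> (h *\<^sub>R y' t))) (at t within {t0..})"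
    using has_derivative_compose[OF y_deriv[OF \<open>t \<ge> t0\<close>, unfolded has_vector_derivative_def] f_grad] .
  then have "((\<lambda>t. f (y t)) has_real_derivative - dtau t * norm (g t)^2) (at t within {t0..})"
    unfolding has_field_derivative_def
    by (rule has_derivative_eq_rhs) (auto simp: fun_eq_iff y'_eq[OF \<open>t \<ge> t0\<close>] power2_norm_eq_inner)
  then show ?thesis unfolding E_def[abs_def] by (intro DERIV_diff[where E = 0, simplified] DERIV_const)
qed

lemma dist_sq_deriv:
  "t \<ge> t0 \<Longrightarrow> ((\<lambda>t. norm (y t - x)^2) has_real_derivative - 2 * dtau t * ((y t - x) \<bullet> g t))
     (at t within {t0..})"
proof -
  assume "t \<ge> t0"
  have d: "((\<lambda>t. y t - x) has_derivative (\<lambda>h. h *\<^sub>R y' t)) (at t within {t0..})"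
    using y_deriv[OF \<open>t \<ge> t0\<close>, unfolded has_vector_derivative_def] by (auto intro!: derivative_eq_intros)
  from has_derivative_inner[OF d d] show ?thesis
    unfolding has_field_derivative_def power2_norm_eq_inner
    by (rule has_derivative_eq_rhs) (auto simp: fun_eq_iff y'_eq[OF \<open>t \<ge> t0\<close>] inner_commute algebra_simps)
qed

lemma dist_sq_antimono:
  assumes "x \<in> S" "t0 \<le> s" "s \<le> t"
  shows "norm (y t - x)^2 \<le> norm (y s - x)^2"
proof (rule antimono_if_deriv_nonpos_Ici[OF assms(2,3) dist_sq_deriv])
  fix r assume "r \<in> {s..t}"
  have "0 \<le> f (y r) - f x" using assms(1) by simp
  also have "\<dots> \<le> (y r - x) \<bullet> g r" by (rule gap_le_inner)
  finally show "- 2 * dtau r * ((y r - x) \<bullet> g r) \<le> 0"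
    using dtau_pos[of r] \<open>r \<in> {s..t}\<close> assms(2) by simp
qed

lemma tau_mono: "t0 \<le> s \<Longrightarrow> s \<le> t \<Longrightarrow> tau s \<le> tau t"
proof -
  assume "t0 \<le> s" "s \<le> t"
  have "- tau t \<le> - tau s"
  proof (rule antimono_if_deriv_nonpos_Ici[OF \<open>t0 \<le> s\<close> \<open>s \<le> t\<close>])
    show "((\<lambda>r. - tau r) has_real_derivative - dtau r) (at r within {t0..})" if "r \<ge> t0" for r
      using that by (intro DERIV_minus tau_deriv)
    show "- dtau r \<le> 0" if "r \<in> {s..t}" for r
      using that \<open>t0 \<le> s\<close> dtau_pos[of r] by simp
  qed
  then show ?thesis by simp
qed

definition dV :: "real \<Rightarrow> real" where
  "dV t = dtau t * (E t - (y t - x_min) \<bullet> g t) - dtau t * tau t * norm (g t)^2"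

lemma V_deriv: "t \<ge> t0 \<Longrightarrow> (V has_real_derivative dV t) (at t within {t0..})"
proof -
  assume "t \<ge> t0"
  have "(V has_real_derivative dtau t * E t + (- dtau t * norm (g t)^2) * tau t
      + (- 2 * dtau t * ((y t - x_min) \<bullet> g t)) / 2) (at t within {t0..})"
    unfolding V_def[abs_def]
    by (intro DERIV_add DERIV_mult DERIV_cdivide tau_deriv E_deriv dist_sq_deriv \<open>t \<ge> t0\<close>)
  then show ?thesis by (rule DERIV_cong) (simp add: dV_def field_simps)
qed

lemma dV_le: "t \<ge> t0 \<Longrightarrow> dV t \<le> - dtau t * tau t * norm (g t)^2"
proof -
  assume "t \<ge> t0"
  have "E t \<le> (y t - x_min) \<bullet> g t" using gap_le_inner by (simp add: E_def)
  then have "dtau t * (E t - (y t - x_min) \<bullet> g t) \<le> 0"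
    using dtau_pos[OF \<open>t \<ge> t0\<close>] by (intro mult_nonneg_nonpos) auto
  then show ?thesis by (simp add: dV_def)
qed

lemma V_nonneg: "t \<ge> t0 \<Longrightarrow> 0 \<le> V t"
  using tau_pos[of t] E_nonneg[of t] by (simp add: V_def)

lemma V_antimono: "t0 \<le> s \<Longrightarrow> s \<le> t \<Longrightarrow> V t \<le> V s"
proof (rule antimono_if_deriv_nonpos_Ici[OF _ _ V_deriv])
  fix r assume "t0 \<le> s" "r \<in> {s..t}"
  then have "t0 \<le> r" by simp
  have "0 \<le> dtau r * tau r * norm (g r)^2"
    using dtau_pos[OF \<open>t0 \<le> r\<close>] tau_pos[OF \<open>t0 \<le> r\<close>] by simp
  then show "dV r \<le> 0" using dV_le[OF \<open>t0 \<le> r\<close>] by linarith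
qed

lemma tail_estimate:
  assumes "t0 \<le> s" "s \<le> t"
  shows "(tau t - tau s) * E t + norm (y t - x_min)^2 / 2 \<le> norm (y s - x_min)^2 / 2"
proof -
  let ?F = "\<lambda>r. (tau r - tau s) * E r + norm (y r - x_min)^2 / 2"
  have "?F t \<le> ?F s"
  proof (rule antimono_if_deriv_nonpos_Ici[OF assms])
    fix r assume "r \<ge> t0"
    have "(?F has_real_derivative (dtau r - 0) * E r + (- dtau r * norm (g r)^2) * (tau r - tau s)
        + (- 2 * dtau r * ((y r - x_min) \<bullet> g r)) / 2) (at r within {t0..})"
      by (intro DERIV_add DERIV_mult DERIV_cdivide DERIV_diff tau_deriv E_deriv dist_sq_deriv
          DERIV_const \<open>r \<ge> t0\<close>)
    then show "(?F has_real_derivative dtau r * (E r - (y r - x_min) \<bullet> g r)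
        - dtau r * (tau r - tau s) * norm (g r)^2) (at r within {t0..})"
      by (rule DERIV_cong) (simp add: field_simps)
  next
    fix r assume "r \<in> {s..t}"
    then have "t0 \<le> r" "tau s \<le> tau r" using assms tau_mono by auto
    moreover have "E r \<le> (y r - x_min) \<bullet> g r" using gap_le_inner by (simp add: E_def)
    ultimately have "dtau r * (E r - (y r - x_min) \<bullet> g r) \<le> 0" "0 \<le> dtau r * (tau r - tau s) * norm (g r)^2"
      using dtau_pos[of r] by (auto intro: mult_nonneg_nonpos)
    then show "dtau r * (E r - (y r - x_min) \<bullet> g r) - dtau r * (tau r - tau s) * norm (g r)^2 \<le> 0"
      by linarith
  qed
  then show ?thesis by simp
qed

subsection \<open>Decay of the gradient\<close>

text \<open>Since \<open>\<nabla>f\<close> is only Lipschitz on bounded sets, \<open>\<parallel>g\<parallel>\<^sup>2\<close> need not be differentiable; its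
  monotonicity is obtained from increments over short intervals.\<close>
lemma norm_g_sq_increment:
  assumes "t0 \<le> r" "r < r'"
    and close: "\<And>\<rho>. \<rho> \<in> {r..r'} \<Longrightarrow> norm (y' \<rho> - y' r') \<le> \<eta>"
    and bound: "\<And>\<rho>. \<rho> \<in> {r..r'} \<Longrightarrow> norm (y' \<rho>) \<le> M"
    and lip: "L-lipschitz_on B gradf" "y r \<in> B" "y r' \<in> B"
    and a_min: "0 < a_min" "a_min \<le> dtau r'"
  shows "norm (g r')^2 - norm (g r)^2 \<le> 2 * (L * M) * \<eta> * (r' - r) / a_min"
proof (rule norm_sq_increment_if_monotone[where a = "dtau r'"])
  have deriv: "(y has_vector_derivative y' x) (at x within {r..r'})" if "x \<in> {r..r'}" for x
    using that \<open>t0 \<le> r\<close> by (intro has_vector_derivative_within_subset[OF y_deriv]) auto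
  show "0 \<le> (g r' - g r) \<bullet> (y r' - y r)"
    by (rule convex_on_gradient_monotone[OF f_convex f_grad])
  show "norm (y r' - y r + ((r' - r) * dtau r') *\<^sub>R g r') \<le> (r' - r) * \<eta>"
    using vector_derivative_linearization_bound[OF _ deriv close] \<open>r < r'\<close> y'_eq[of r'] \<open>t0 \<le> r\<close>
    by (simp add: algebra_simps)
  have "0 \<le> L" using lip(1) by (rule lipschitz_on_nonneg)
  have "norm (g r' - g r) \<le> L * norm (y r' - y r)"
    using lipschitz_onD[OF lip(1,3,2)] by (simp add: dist_norm)
  also have "\<dots> \<le> L * (M * (r' - r))"
    using vector_derivative_norm_bound[OF _ deriv bound] \<open>r < r'\<close> \<open>0 \<le> L\<close> by (intro mult_left_mono) auto
  finally show "norm (g r' - g r) \<le> L * M * (r' - r)" by (simp add: ac_simps)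
  show "0 \<le> L * M"
    using \<open>0 \<le> L\<close> bound[of r] \<open>r < r'\<close> by (auto intro!: mult_nonneg_nonneg intro: order_trans[OF norm_ge_zero])
qed (use \<open>r < r'\<close> a_min in auto)

lemma bounds_on_interval:
  assumes "t0 \<le> s" "s \<le> t"
  obtains M a_min L where "\<And>r. r \<in> {s..t} \<Longrightarrow> norm (y' r) \<le> M"
    and "0 < a_min" "\<And>r. r \<in> {s..t} \<Longrightarrow> a_min \<le> dtau r"
    and "L-lipschitz_on (y ` {s..t}) gradf"
proof -
  have sub: "{s..t} \<subseteq> {t0..}" using assms by auto
  have "compact {s..t}" "{s..t} \<noteq> {}" using assms by auto
  obtain M where "\<forall>r\<in>{s..t}. norm (y' r) \<le> M"
    using compact_imp_bounded[OF compact_continuous_image[OF continuous_on_subset[OF y'_cont sub] \<open>compact {s..t}\<close>]]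
    by (auto simp: bounded_iff)
  moreover obtain r_min where "r_min \<in> {s..t}" "\<And>r. r \<in> {s..t} \<Longrightarrow> dtau r_min \<le> dtau r"
    using continuous_attains_inf[OF \<open>compact {s..t}\<close> \<open>{s..t} \<noteq> {}\<close> continuous_on_subset[OF dtau_continuous sub]]
    by blast
  moreover have "0 < dtau r_min" using dtau_pos \<open>r_min \<in> {s..t}\<close> sub by auto
  moreover obtain L where "L-lipschitz_on (y ` {s..t}) gradf"
    using grad_lip compact_imp_bounded[OF compact_continuous_image[OF continuous_on_subset[OF y_continuous sub]
        \<open>compact {s..t}\<close>]] by blast
  ultimately show ?thesis using that by blast
qed

lemma norm_g_sq_small_increments:
  assumes "t0 \<le> s" "s \<le> t" "\<epsilon> > 0"
  shows "\<exists>\<delta>>0. \<forall>r r'. s \<le> r \<longrightarrow> r < r' \<longrightarrow> r' \<le> t \<longrightarrow> r' - r < \<delta>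
           \<longrightarrow> norm (g r')^2 - norm (g r)^2 \<le> \<epsilon> * (r' - r)"
proof -
  obtain M a_min L where M: "\<And>r. r \<in> {s..t} \<Longrightarrow> norm (y' r) \<le> M"
    and "0 < a_min" and a_min: "\<And>r. r \<in> {s..t} \<Longrightarrow> a_min \<le> dtau r"
    and L: "L-lipschitz_on (y ` {s..t}) gradf"
    using bounds_on_interval[OF assms(1,2)] by blast
  have "0 \<le> M" using order_trans[OF norm_ge_zero M[of s]] assms(2) by simp
  then have "0 \<le> L * M" using lipschitz_on_nonneg[OF L] by simp
  define \<eta> where "\<eta> = \<epsilon> * a_min / (2 * (L * M + 1))"
  have "\<eta> > 0" using \<open>\<epsilon> > 0\<close> \<open>0 < a_min\<close> \<open>0 \<le> L * M\<close> by (simp add: \<eta>_def add_nonneg_pos)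
  have "uniformly_continuous_on {s..t} y'"
    using assms(1) by (intro compact_uniformly_continuous continuous_on_subset[OF y'_cont]) auto
  then obtain \<delta> where "\<delta> > 0"
    and \<delta>: "\<And>x x'. x \<in> {s..t} \<Longrightarrow> x' \<in> {s..t} \<Longrightarrow> dist x' x < \<delta> \<Longrightarrow> dist (y' x') (y' x) < \<eta>"
    using \<open>\<eta> > 0\<close> unfolding uniformly_continuous_on_def by metis
  have "norm (g r')^2 - norm (g r)^2 \<le> \<epsilon> * (r' - r)"
    if "s \<le> r" "r < r'" "r' \<le> t" "r' - r < \<delta>" for r r'
  proof -
    have "norm (g r')^2 - norm (g r)^2 \<le> 2 * (L * M) * \<eta> * (r' - r) / a_min"
    proof (rule norm_g_sq_increment[OF _ \<open>r < r'\<close> _ _ L _ _ \<open>0 < a_min\<close>])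
      fix \<rho> assume "\<rho> \<in> {r..r'}"
      then have "\<rho> \<in> {s..t}" "r' \<in> {s..t}" "dist \<rho> r' < \<delta>" using that by (auto simp: dist_real_def)
      then show "norm (y' \<rho> - y' r') \<le> \<eta>" "norm (y' \<rho>) \<le> M" using \<delta>[of r' \<rho>] M by (auto simp: dist_norm)
    qed (use that assms a_min in auto)
    also have "\<dots> \<le> \<epsilon> * (r' - r)"
    proof -
      have "2 * (L * M) * \<eta> \<le> 2 * (L * M + 1) * \<eta>" using \<open>\<eta> > 0\<close> by simp
      also have "\<dots> = \<epsilon> * a_min" using \<open>0 \<le> L * M\<close> by (simp add: \<eta>_def)
      finally have "2 * (L * M) * \<eta> * (r' - r) \<le> \<epsilon> * a_min * (r' - r)"
        using \<open>r < r'\<close> by (intro mult_right_mono) auto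
      then show ?thesis using \<open>0 < a_min\<close> by (simp add: pos_divide_le_eq ac_simps)
    qed
    finally show ?thesis .
  qed
  with \<open>\<delta> > 0\<close> show ?thesis by blast
qed

lemma norm_g_antimono:
  assumes "t0 \<le> s" "s \<le> t"
  shows "norm (g t) \<le> norm (g s)"
proof -
  have "norm (g t)^2 \<le> norm (g s)^2"
    by (rule antimono_if_increments_small[OF assms(2) norm_g_sq_small_increments[OF assms]])
  then show ?thesis by (rule power2_le_imp_le) simp
qed

lemma V_plus_grad_tau_antimono:
  assumes "t0 \<le> s" "s \<le> t"
  shows "V t + norm (g t)^2 * tau t ^ 2 / 2 \<le> V s + norm (g t)^2 * tau s ^ 2 / 2"
proof -
  define c where "c = norm (g t)^2"
  have "(\<lambda>r. V r + c * tau r ^ 2 / 2) t \<le> (\<lambda>r. V r + c * tau r ^ 2 / 2) s"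
  proof (rule antimono_if_deriv_nonpos_Ici[OF assms])
    fix r assume "t0 \<le> r"
    show "((\<lambda>r. V r + c * tau r ^ 2 / 2) has_real_derivative dV r + c * (2 * tau r * dtau r) / 2)
        (at r within {t0..})"
    proof (intro DERIV_add DERIV_cdivide DERIV_cmult V_deriv \<open>t0 \<le> r\<close>)
      show "((\<lambda>r. tau r ^ 2) has_real_derivative 2 * tau r * dtau r) (at r within {t0..})"
        using DERIV_power[OF tau_deriv[OF \<open>t0 \<le> r\<close>], of 2] by (simp add: ac_simps)
    qed
  next
    fix r assume "r \<in> {s..t}"
    then have "t0 \<le> r" using assms by simp
    have "c \<le> norm (g r)^2"
      unfolding c_def using norm_g_antimono[OF \<open>t0 \<le> r\<close>, of t] \<open>r \<in> {s..t}\<close> by (simp add: power_mono)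
    then have "dtau r * tau r * c \<le> dtau r * tau r * norm (g r)^2"
      using dtau_pos[OF \<open>t0 \<le> r\<close>] tau_pos[OF \<open>t0 \<le> r\<close>] by (simp add: mult_left_mono)
    then show "dV r + c * (2 * tau r * dtau r) / 2 \<le> 0"
      using dV_le[OF \<open>t0 \<le> r\<close>] by (simp add: algebra_simps)
  qed
  then show ?thesis by (simp add: c_def)
qed

lemma grad_tau_bounded: "\<exists>K>0. \<forall>t\<ge>t0. norm (g t) * tau t \<le> K"
proof -
  define K where "K = sqrt (2 * V t0 + (norm (g t0) * tau t0)^2)"
  have "0 \<le> K" using V_nonneg[of t0] by (simp add: K_def)
  have "norm (g t) * tau t \<le> K" if "t \<ge> t0" for t
  proof -
    have "V t + norm (g t)^2 * tau t ^ 2 / 2 \<le> V t0 + norm (g t)^2 * tau t0 ^ 2 / 2"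
      using V_plus_grad_tau_antimono[OF order_refl that] .
    moreover have "norm (g t)^2 * tau t0 ^ 2 \<le> norm (g t0)^2 * tau t0 ^ 2"
      using norm_g_antimono[OF order_refl that] by (intro mult_right_mono power_mono) auto
    ultimately have "(norm (g t) * tau t)^2 \<le> 2 * V t0 + (norm (g t0) * tau t0)^2"
      using V_nonneg[OF that] by (simp only: power_mult_distrib)
    also have "\<dots> = K^2" unfolding K_def using V_nonneg[of t0] by simp
    finally have "(norm (g t) * tau t)^2 \<le> K^2" .
    then show ?thesis using \<open>0 \<le> K\<close> by (rule power2_le_imp_le)
  qed
  then have "\<forall>t\<ge>t0. norm (g t) * tau t \<le> K + 1" by force
  moreover have "K + 1 > 0" using \<open>0 \<le> K\<close> by simp
  ultimately show ?thesis by blast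
qed

subsection \<open>Growth of the time scale\<close>

definition rho :: real where "rho = p * q / (p * q + p - 1)"

lemma pq_pos: "0 < p * q + p - 1"
proof -
  have "0 < p * q" using p_ge q_pos by simp
  with p_ge show ?thesis by linarith
qed

lemma rho_pos: "0 < rho"
  using p_ge q_pos pq_pos by (simp add: rho_def)

lemma one_minus_rho: "1 - rho = (p - 1) / (p * q + p - 1)"
  using pq_pos by (simp add: rho_def field_simps)

lemma rho_rate: "rho * (1 + q - 1 / p) = q"
proof -
  have "1 + q - 1 / p = (p * q + p - 1) / p" using p_ge by (simp add: field_simps)
  then show ?thesis using pq_pos p_ge by (simp add: rho_def)
qed

lemma rho_gamma: "rho * (1 + 1 / q - 1 / (p * q)) = 1"
proof -
  have "1 + 1 / q - 1 / (p * q) = (p * q + p - 1) / (p * q)" using p_ge q_pos by (simp add: field_simps)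
  then show ?thesis using pq_pos p_ge q_pos by (simp add: rho_def)
qed

lemma rate_pos: "0 < 1 + q - 1 / p"
proof -
  have "1 / p \<le> 1" using p_ge by simp
  then show ?thesis using q_pos by linarith
qed

lemma lam_root_lower: "\<exists>c>0. \<forall>t\<ge>t0. c * Lam t powr (1 - rho) \<le> lam t powr (1 / q)"
proof -
  obtain K where "K > 0" and K: "\<And>t. t \<ge> t0 \<Longrightarrow> norm (g t) * tau t \<le> K"
    using grad_tau_bounded by blast
  have "(K * q) powr (- (1 - rho)) * Lam t powr (1 - rho) \<le> lam t powr (1 / q)" if "t \<ge> t0" for t
  proof -
    have "0 < lam t powr (1 / q) / Lam t" using lam_pos[OF that] Lam_pos[OF that] by simp
    have "norm (y' t) = dtau t * norm (g t)" using y'_eq[OF that] dtau_pos[OF that] by simp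
    also have "\<dots> = q * (lam t powr (1 / q) / Lam t) * (norm (g t) * tau t)" by (simp add: dtau_def)
    also have "\<dots> \<le> q * (lam t powr (1 / q) / Lam t) * K"
      using K[OF that] q_pos \<open>0 < lam t powr (1 / q) / Lam t\<close> by (intro mult_left_mono mult_nonneg_nonneg) auto
    finally have "norm (y' t) \<le> K * q * lam t powr (1 / q) / Lam t" by (simp add: ac_simps)
    from closed_loop_root_lower[OF p_ge q_pos lam_pos[OF that] norm_ge_zero _ Lam_pos[OF that]
        closed_loop[OF that] this]
    have "(Lam t / (K * q)) powr (1 - rho) \<le> lam t powr (1 / q)"
      using \<open>K > 0\<close> q_pos by (simp add: one_minus_rho)
    moreover have "(Lam t / (K * q)) powr (1 - rho) = (K * q) powr (- (1 - rho)) * Lam t powr (1 - rho)"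
      using \<open>K > 0\<close> q_pos Lam_pos[OF that] powr_minus_divide[of "K * q" "1 - rho"]
      by (simp add: powr_divide)
    ultimately show ?thesis by simp
  qed
  moreover have "(K * q) powr (- (1 - rho)) > 0" using \<open>K > 0\<close> q_pos by simp
  ultimately show ?thesis by blast
qed

lemma Lam_powr_lower: "\<exists>c>0. \<forall>t\<ge>t0. c * t \<le> Lam t powr rho"
proof -
  obtain c0 where "c0 > 0" and c0: "\<And>t. t \<ge> t0 \<Longrightarrow> c0 * Lam t powr (1 - rho) \<le> lam t powr (1 / q)"
    using lam_root_lower by blast
  define c where "c = min (rho * c0) (t0 powr (rho - 1))"
  have "c * t \<le> Lam t powr rho" if "t \<ge> t0" for t
  proof -
    have "Lam t0 powr (1 - (1 - rho)) + (1 - (1 - rho)) * c0 * (t - t0) \<le> Lam t powr (1 - (1 - rho))"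
      by (rule powr_lower_if_deriv_ge[OF Lam_deriv Lam_pos c0 _ that]) (use rho_pos in simp_all)
    then have "t0 powr rho + rho * c0 * (t - t0) \<le> Lam t powr rho" by (simp add: Lam_t0)
    moreover have "c * t0 \<le> t0 powr rho"
    proof -
      have "t0 powr rho = t0 powr (rho - 1) * t0" using t0_pos by (simp add: powr_diff)
      then show ?thesis using t0_pos by (simp add: c_def)
    qed
    moreover have "c * (t - t0) \<le> rho * c0 * (t - t0)"
      using that by (intro mult_right_mono) (auto simp: c_def)
    ultimately show ?thesis by (simp add: algebra_simps)
  qed
  moreover have "c > 0" using rho_pos \<open>c0 > 0\<close> t0_pos by (simp add: c_def)
  ultimately show ?thesis by blast
qed

lemma tau_lower: "\<exists>\<kappa>>0. \<forall>t\<ge>t0. \<kappa> * t powr (1 + q - 1 / p) \<le> tau t"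
proof -
  obtain c where "c > 0" and c: "\<And>t. t \<ge> t0 \<Longrightarrow> c * t \<le> Lam t powr rho" using Lam_powr_lower by blast
  define b where "b = 1 + q - 1 / p"
  have "c powr b / q powr q * t powr b \<le> tau t" if "t \<ge> t0" for t
  proof -
    have "0 \<le> c * t" using \<open>c > 0\<close> that t0_pos by simp
    have "c powr b * t powr b = (c * t) powr b"
      using \<open>0 \<le> c * t\<close> \<open>c > 0\<close> by (simp add: powr_mult)
    also have "\<dots> \<le> (Lam t powr rho) powr b"
      using rate_pos \<open>0 \<le> c * t\<close> c[OF that] unfolding b_def by (intro powr_mono2) auto
    also have "\<dots> = Lam t powr q" unfolding powr_powr b_def rho_rate ..
    finally have "c powr b * t powr b / q powr q \<le> Lam t powr q / q powr q"
      using q_pos by (simp add: divide_right_mono)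
    then show ?thesis by (simp add: tau_eq)
  qed
  moreover have "c powr b / q powr q > 0" using \<open>c > 0\<close> q_pos by simp
  ultimately show ?thesis unfolding b_def by blast
qed

lemma tau_at_top: "filterlim tau at_top at_top"
proof -
  obtain \<kappa> where "\<kappa> > 0" and \<kappa>: "\<And>t. t \<ge> t0 \<Longrightarrow> \<kappa> * t powr (1 + q - 1 / p) \<le> tau t"
    using tau_lower by blast
  have "filterlim (\<lambda>t. \<kappa> * t powr (1 + q - 1 / p)) at_top at_top"
    by (rule filterlim_tendsto_pos_mult_at_top[OF tendsto_const \<open>\<kappa> > 0\<close> real_powr_at_top[OF rate_pos]])
  moreover have "\<forall>\<^sub>F t in at_top. \<kappa> * t powr (1 + q - 1 / p) \<le> tau t"
    using eventually_ge_at_top[of t0] by eventually_elim (rule \<kappa>)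
  ultimately show ?thesis by (rule filterlim_at_top_mono)
qed

subsection \<open>Rates, integrability and weak convergence\<close>

lemma eventually_tau_ge_double: "\<forall>\<^sub>F t in at_top. 2 * tau s \<le> tau t"
  using tau_at_top by (simp add: filterlim_at_top)

lemma tau_E_tendsto_zero: "((\<lambda>t. tau t * E t) \<longlongrightarrow> 0) at_top"
proof -
  obtain H where H: "((\<lambda>t. norm (y t - x_min)^2) \<longlongrightarrow> H) at_top" "\<forall>t\<ge>t0. H \<le> norm (y t - x_min)^2"
    using antimono_on_Ici_convergent[of t0 "\<lambda>t. norm (y t - x_min)^2" 0] dist_sq_antimono[OF x_min_in_S]
    by auto
  show ?thesis
  proof (rule tendsto_zero_if_dominated_by_tail[OF H(1)])
    fix s assume "s \<ge> t0"
    show "\<forall>\<^sub>F t in at_top. 0 \<le> tau t * E t \<and> tau t * E t \<le> norm (y s - x_min)^2 - H"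
      using eventually_tau_ge_double[of s] eventually_ge_at_top[of s]
    proof eventually_elim
      case (elim t)
      with \<open>s \<ge> t0\<close> have "t0 \<le> t" by simp
      have "tau t * E t / 2 \<le> (tau t - tau s) * E t"
        using mult_right_mono[of "tau t / 2" "tau t - tau s" "E t"] elim(1) E_nonneg by simp
      with tail_estimate[OF \<open>s \<ge> t0\<close> elim(2)] H(2)[rule_format, OF \<open>t0 \<le> t\<close>]
      have "tau t * E t \<le> norm (y s - x_min)^2 - H" by linarith
      moreover have "0 \<le> tau t * E t" using tau_pos[OF \<open>t0 \<le> t\<close>] E_nonneg by simp
      ultimately show ?case by simp
    qed
  qed
qed

lemma grad_tau_tendsto_zero: "((\<lambda>t. norm (g t) * tau t) \<longlongrightarrow> 0) at_top"
proof -
  obtain W where W: "(V \<longlongrightarrow> W) at_top" "\<forall>t\<ge>t0. W \<le> V t"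
    using antimono_on_Ici_convergent[of t0 V 0] V_antimono V_nonneg by auto
  have "((\<lambda>t. (norm (g t) * tau t)^2) \<longlongrightarrow> 0) at_top"
  proof (rule tendsto_zero_if_dominated_by_tail[of "\<lambda>t. 8 / 3 * V t" "8 / 3 * W"])
    show "((\<lambda>t. 8 / 3 * V t) \<longlongrightarrow> 8 / 3 * W) at_top" using W(1) by (rule tendsto_mult_left)
    fix s assume "s \<ge> t0"
    show "\<forall>\<^sub>F t in at_top. 0 \<le> (norm (g t) * tau t)^2 \<and> (norm (g t) * tau t)^2 \<le> 8 / 3 * V s - 8 / 3 * W"
      using eventually_tau_ge_double[of s] eventually_ge_at_top[of s]
    proof eventually_elim
      case (elim t)
      with \<open>s \<ge> t0\<close> have "t0 \<le> t" by simp
      define c where "c = norm (g t)^2"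
      have "(2 * tau s)^2 \<le> tau t ^ 2"
        using elim(1) tau_pos[OF \<open>s \<ge> t0\<close>] by (intro power_mono) auto
      then have "c * (4 * tau s ^ 2) \<le> c * tau t ^ 2"
        by (intro mult_left_mono) (simp_all add: c_def power_mult_distrib)
      then have "c * tau s ^ 2 \<le> c * tau t ^ 2 / 4" by simp
      moreover have "V t + c * tau t ^ 2 / 2 \<le> V s + c * tau s ^ 2 / 2"
        unfolding c_def by (rule V_plus_grad_tau_antimono[OF \<open>s \<ge> t0\<close> elim(2)])
      ultimately have "3 / 8 * (c * tau t ^ 2) \<le> V s - W" using W(2)[rule_format, OF \<open>t0 \<le> t\<close>] by linarith
      then show ?case by (simp add: c_def power_mult_distrib)
    qed
  qed
  then have "((\<lambda>t. sqrt ((norm (g t) * tau t)^2)) \<longlongrightarrow> sqrt 0) at_top" by (rule tendsto_real_sqrt)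
  then show ?thesis by (simp add: tendsto_rabs_zero_iff)
qed

lemma E_rate: "((\<lambda>t. E t * t powr (1 + q - 1 / p)) \<longlongrightarrow> 0) at_top"
proof -
  obtain \<kappa> where "\<kappa> > 0" and \<kappa>: "\<And>t. t \<ge> t0 \<Longrightarrow> \<kappa> * t powr (1 + q - 1 / p) \<le> tau t"
    using tau_lower by blast
  have "\<forall>\<^sub>F t in at_top. norm (E t * t powr (1 + q - 1 / p)) \<le> tau t * E t / \<kappa>"
    using eventually_ge_at_top[of t0]
  proof eventually_elim
    case (elim t)
    have "\<kappa> * (E t * t powr (1 + q - 1 / p)) \<le> tau t * E t"
      using mult_right_mono[OF \<kappa>[OF elim] E_nonneg] by (simp add: ac_simps)
    then show ?case using \<open>\<kappa> > 0\<close> E_nonneg by (simp add: pos_le_divide_eq mult.commute)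
  qed
  moreover have "((\<lambda>t. tau t * E t / \<kappa>) \<longlongrightarrow> 0) at_top"
    using tendsto_divide[OF tau_E_tendsto_zero tendsto_const, of \<kappa>] \<open>\<kappa> > 0\<close> by simp
  ultimately show ?thesis by (rule Lim_null_comparison)
qed

lemma grad_rate: "((\<lambda>t. norm (g t) * t powr (1 + q - 1 / p)) \<longlongrightarrow> 0) at_top"
proof -
  obtain \<kappa> where "\<kappa> > 0" and \<kappa>: "\<And>t. t \<ge> t0 \<Longrightarrow> \<kappa> * t powr (1 + q - 1 / p) \<le> tau t"
    using tau_lower by blast
  have "\<forall>\<^sub>F t in at_top. norm (norm (g t) * t powr (1 + q - 1 / p)) \<le> norm (g t) * tau t / \<kappa>"
    using eventually_ge_at_top[of t0]
  proof eventually_elim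
    case (elim t)
    have "\<kappa> * (norm (g t) * t powr (1 + q - 1 / p)) \<le> norm (g t) * tau t"
      using mult_left_mono[OF \<kappa>[OF elim], of "norm (g t)"] by (simp add: ac_simps)
    then show ?case using \<open>\<kappa> > 0\<close> by (simp add: pos_le_divide_eq mult.commute)
  qed
  moreover have "((\<lambda>t. norm (g t) * tau t / \<kappa>) \<longlongrightarrow> 0) at_top"
    using tendsto_divide[OF grad_tau_tendsto_zero tendsto_const, of \<kappa>] \<open>\<kappa> > 0\<close> by simp
  ultimately show ?thesis by (rule Lim_null_comparison)
qed

lemma weighted_grad_integral_bound:
  assumes "T \<ge> t0"
  shows "(\<lambda>r. dtau r * tau r * norm (g r)^2) integrable_on {t0..T}"
    and "integral {t0..T} (\<lambda>r. dtau r * tau r * norm (g r)^2) \<le> V t0"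
proof -
  have "continuous_on {t0..T} (\<lambda>r. dtau r * tau r * norm (g r)^2)"
    by (intro continuous_intros continuous_on_subset[OF dtau_continuous] continuous_on_subset[OF tau_continuous]
        continuous_on_subset[OF g_continuous]) auto
  then show int: "(\<lambda>r. dtau r * tau r * norm (g r)^2) integrable_on {t0..T}"
    by (rule integrable_continuous_real)
  have "(dV has_integral (V T - V t0)) {t0..T}"
  proof (rule fundamental_theorem_of_calculus[OF assms])
    fix r assume "r \<in> {t0..T}"
    then show "(V has_vector_derivative dV r) (at r within {t0..T})"
      using has_field_derivative_subset[OF V_deriv[of r], of "{t0..T}"]
      unfolding has_real_derivative_iff_has_vector_derivative by auto
  qed
  from has_integral_le[OF integrable_integral[OF int] has_integral_neg[OF this]]
  have "integral {t0..T} (\<lambda>r. dtau r * tau r * norm (g r)^2) \<le> - (V T - V t0)"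
    using dV_le by fastforce
  then show "integral {t0..T} (\<lambda>r. dtau r * tau r * norm (g r)^2) \<le> V t0"
    using V_nonneg[OF assms] by linarith
qed

lemma velocity_weight_bound:
  "\<exists>C>0. \<forall>t\<ge>t0. t powr (1 + 1 / q - 1 / (p * q)) * norm (y' t) powr (2 + (p - 1) / (p * q))
      \<le> C * (dtau t * tau t * norm (g t)^2)"
proof -
  obtain c where "c > 0" and c: "\<And>t. t \<ge> t0 \<Longrightarrow> c * t \<le> Lam t powr rho" using Lam_powr_lower by blast
  define a b where "a = 1 + 1 / q - 1 / (p * q)" and "b = (p - 1) / (p * q)"
  have "0 \<le> b" using p_ge q_pos by (simp add: b_def)
  have "0 < rho * a" using rho_gamma by (simp add: a_def)
  then have "0 < a" using rho_pos by (simp add: zero_less_mult_iff)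
  have "t powr a * norm (y' t) powr (2 + b) \<le> q / c powr a * (dtau t * tau t * norm (g t)^2)"
    if "t \<ge> t0" for t
  proof (cases "norm (y' t) = 0")
    case True
    then show ?thesis using q_pos dtau_pos[OF that] tau_pos[OF that] \<open>0 \<le> b\<close> by simp
  next
    case False
    define m where "m = lam t powr (1 / q)"
    have "m > 0" "Lam t > 0" using lam_pos[OF that] Lam_pos[OF that] by (simp_all add: m_def)
    have "(c * t) powr a \<le> (Lam t powr rho) powr a"
      using c[OF that] \<open>c > 0\<close> that t0_pos \<open>0 < a\<close> by (intro powr_mono2) auto
    then have "c powr a * t powr a \<le> Lam t"
      using \<open>c > 0\<close> that t0_pos \<open>Lam t > 0\<close> by (simp add: powr_mult powr_powr rho_gamma[folded a_def])
    then have time: "t powr a \<le> Lam t / c powr a" using \<open>c > 0\<close> by (simp add: field_simps)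
    have "norm (y' t) powr b = 1 / m"
      using closed_loop_velocity_powr[OF p_ge q_pos lam_pos[OF that] _ closed_loop[OF that]] False
      by (simp add: b_def m_def powr_minus_divide)
    then have velocity: "norm (y' t) powr (2 + b) = (dtau t * norm (g t))^2 / m"
      using False y'_eq[OF that] dtau_pos[OF that] by (simp add: powr_add)
    have "Lam t * dtau t / m = q * tau t"
      using \<open>m > 0\<close> \<open>Lam t > 0\<close> by (simp add: dtau_def m_def)
    have "t powr a * norm (y' t) powr (2 + b) \<le> Lam t / c powr a * ((dtau t * norm (g t))^2 / m)"
      unfolding velocity using \<open>m > 0\<close> by (intro mult_right_mono[OF time]) simp
    also have "\<dots> = (Lam t * dtau t / m) / c powr a * (dtau t * norm (g t)^2)"
      by (simp add: power2_eq_square ac_simps)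
    also have "\<dots> = q / c powr a * (dtau t * tau t * norm (g t)^2)"
      unfolding \<open>Lam t * dtau t / m = q * tau t\<close> by (simp add: ac_simps)
    finally show ?thesis .
  qed
  moreover have "q / c powr a > 0" using q_pos \<open>c > 0\<close> by simp
  ultimately show ?thesis unfolding a_def b_def by blast
qed

lemma velocity_integrable:
  "(\<lambda>t. t powr (1 + 1 / q - 1 / (p * q)) * norm (y' t) powr (2 + (p - 1) / (p * q))) integrable_on {t0..}"
proof -
  let ?h = "\<lambda>t. t powr (1 + 1 / q - 1 / (p * q)) * norm (y' t) powr (2 + (p - 1) / (p * q))"
  let ?k = "\<lambda>r. dtau r * tau r * norm (g r)^2"
  obtain C where "C > 0" and C: "\<And>t. t \<ge> t0 \<Longrightarrow> ?h t \<le> C * ?k t" using velocity_weight_bound by blast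
  have "0 < 2 + (p - 1) / (p * q)" using p_ge q_pos by (simp add: add_pos_nonneg)
  then have cont: "continuous_on {t0..} ?h"
    using t0_pos by (intro continuous_intros continuous_on_powr' y'_cont) auto
  show ?thesis
  proof (rule integrable_on_Ici_if_bounded_integrals)
    fix T assume "T \<ge> t0"
    show int: "?h integrable_on {t0..T}"
      by (rule integrable_continuous_real, rule continuous_on_subset[OF cont]) auto
    have "integral {t0..T} ?h \<le> integral {t0..T} (\<lambda>r. C * ?k r)"
      using C integrable_on_cmult_left[OF weighted_grad_integral_bound(1)[OF \<open>T \<ge> t0\<close>], of C]
      by (intro integral_le[OF int]) auto
    also have "\<dots> \<le> C * V t0"
      using weighted_grad_integral_bound(2)[OF \<open>T \<ge> t0\<close>] \<open>C > 0\<close> by simp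
    finally show "integral {t0..T} ?h \<le> C * V t0" .
  qed simp
qed

lemma trajectory_bounded: "bounded (y ` {t0..})"
proof (rule bounded_subset[OF bounded_cball])
  show "y ` {t0..} \<subseteq> cball x_min (norm (y t0 - x_min))"
    using dist_sq_antimono[OF x_min_in_S order_refl]
    by (auto simp: dist_norm norm_minus_commute intro: power2_le_imp_le)
qed

lemma E_tendsto_zero: "(E \<longlongrightarrow> 0) at_top"
proof (rule Lim_null_comparison[OF _ E_rate])
  show "\<forall>\<^sub>F t in at_top. norm (E t) \<le> E t * t powr (1 + q - 1 / p)"
    using eventually_ge_at_top[of 1]
  proof eventually_elim
    case (elim t)
    then have "1 \<le> t powr (1 + q - 1 / p)" using rate_pos by (intro ge_one_powr_ge_zero) auto
    from mult_left_mono[OF this E_nonneg] show ?case using E_nonneg by simp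
  qed
qed

lemma weak_conv_to_minimizer: "\<exists>x\<in>S. weak_conv_at_top y x"
proof (rule weak_conv_Opial[OF _ trajectory_bounded])
  fix x assume "x \<in> S"
  then show "\<exists>L. ((\<lambda>t. norm (y t - x)^2) \<longlongrightarrow> L) at_top"
    using antimono_on_Ici_convergent[of t0 "\<lambda>t. norm (y t - x)^2" 0] dist_sq_antimono by auto
next
  fix w assume w: "\<And>C. closed C \<Longrightarrow> convex C \<Longrightarrow> (\<forall>\<^sub>F t in at_top. y t \<in> C) \<Longrightarrow> w \<in> C"
  have "f w \<le> f x_min + \<epsilon>" if "\<epsilon> > 0" for \<epsilon>
  proof -
    have "\<forall>\<^sub>F t in at_top. y t \<in> {x. f x \<le> f x_min + \<epsilon>}"
      using tendstoD[OF E_tendsto_zero \<open>\<epsilon> > 0\<close>] by eventually_elim (auto simp: E_def dist_real_def)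
    then have "w \<in> {x. f x \<le> f x_min + \<epsilon>}"
      using w closed_Collect_le[OF f_continuous continuous_on_const] convex_on_sublevel[OF f_convex] by blast
    then show ?thesis by simp
  qed
  then have "f w \<le> f x_min" by (rule field_le_epsilon)
  then show "w \<in> S" using f_x_min_le order_trans by blast
qed

end

theorem mainTheorem3:
  fixes f :: "'a::{real_inner, complete_space} \<Rightarrow> real"
    and gradf :: "'a \<Rightarrow> 'a"
    and y y' :: "real \<Rightarrow> 'a"
    and lam :: "real \<Rightarrow> real"
    and t0 q p :: real
  assumes f_convex: "convex_on UNIV f"
    and f_grad: "\<And>x. (f has_derivative (\<lambda>h. gradf x \<bullet> h)) (at x)"
    and grad_cont: "continuous_on UNIV gradf"
    and S_nonempty: "{x. \<forall>z. f x \<le> f z} \<noteq> {}"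
    and grad_lip: "\<And>B. bounded B \<Longrightarrow> \<exists>L. L-lipschitz_on B gradf"
    and t0_pos: "t0 > 0" and q_pos: "q > 0" and p_ge: "p \<ge> 1"
    and y_deriv: "\<And>t. t \<ge> t0 \<Longrightarrow> (y has_vector_derivative y' t) (at t within {t0..})"
    and y'_cont: "continuous_on {t0..} y'"
    and lam_cont: "continuous_on {t0..} lam"
    and lam_pos: "\<And>t. t \<ge> t0 \<Longrightarrow> lam t > 0"
    and ode: "\<And>t. t \<ge> t0 \<Longrightarrow>
       y' t + vector_derivative (tau_fun t0 q lam) (at t within {t0..}) *\<^sub>R gradf (y t) = 0"
    and closed_loop: "\<And>t. t \<ge> t0 \<Longrightarrow> lam t powr p * rpow (norm (y' t)) (p - 1) = 1"
  shows "((\<lambda>t. f (y t) - (INF x. f x)) \<in> o[at_top](\<lambda>t. t powr (-(1 + q - 1 / p)))) \<and>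
         ((\<lambda>t. norm (gradf (y t))) \<in> o[at_top](\<lambda>t. t powr (-(1 + q - 1 / p)))) \<and>
         ((\<lambda>t. t powr (1 + 1 / q - 1 / (p * q)) * norm (y' t) powr (2 + (p - 1) / (p * q)))
           integrable_on {t0..}) \<and>
         (\<exists>x\<in>{x. \<forall>z. f x \<le> f z}. weak_conv_at_top y x)"
proof -
  interpret closed_loop_trajectory f gradf y y' lam t0 q p
    by unfold_locales (use assms in auto)
  have "(\<lambda>t. f (y t) - (INF x. f x)) = E"
    by (simp add: fun_eq_iff E_def INF_eq_f_x_min)
  with smallo_powr_neg_if_tendsto_zero[OF E_rate] smallo_powr_neg_if_tendsto_zero[OF grad_rate]
  show ?thesis using velocity_integrable weak_conv_to_minimizer by simp
qed

end
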